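(* (Strong Laurent phenomenon.) For any $m\in\mathbb{Z}$, $$\mathcal{A}(P_1,P_2)=\bigcap_{k\in\mathbb{Z}}\mathcal{T}_k=\bigcap_{k=m-1}^{m+1}\mathcal{T}_k,$$ the intersections taken in $\Bbbk(x_1,x_2)$.
   Context: $\Bbbk$ is a field of characteristic zero and $P_1,P_2\in\Bbbk[z]$ are monic palindromic polynomials of degrees $d_1,d_2\ge0$ (palindromic: $P(z)=z^dP(z^{-1})$ for $d=\deg P$). With $x_1,x_2$ commuting indeterminates, define $x_k\in\Bbbk(x_1,x_2)$ for all $k\in\mathbb{Z}$ by $x_{k+1}x_{k-1}=P_1(x_k)$ if $k$ is even and $x_{k+1}x_{k-1}=P_2(x_k)$ if $k$ is odd. $\underline\Bbbk$ is the $\mathbb{Z}$-subalgebra of $\Bbbk$ generated by the coefficients of $P_1,P_2$; $\mathcal{A}(P_1,P_2)$ is the $\underline\Bbbk$-subalgebra of $\Bbbk(x_1,x_2)$ generated by all $x_k$; $\mathcal{T}_k=\underline\Bbbk[x_k^{\pm1},x_{k+1}^{\pm1}]$. *)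

theory Defs
  imports "HOL-Computational_Algebra.Polynomial" "HOL-Computational_Algebra.Fraction_Field"
begin

text \<open>The field of rational functions k(x1,x2), realised as the fraction field of
  k[x1][x2] (outer polynomial variable = x2, inner = x1).\<close>
type_synonym 'k ratfun2 = "'k poly poly fract"

definition const2 :: "'k::field \<Rightarrow> 'k ratfun2" where
  "const2 c = Fract [:[:c:]:] 1"

definition X1 :: "'k::field ratfun2" where
  "X1 = Fract [:[:0, 1:]:] 1"

definition X2 :: "'k::field ratfun2" where
  "X2 = Fract [:0, 1:] 1"

definition evalP :: "'k::field poly \<Rightarrow> 'k ratfun2 \<Rightarrow> 'k ratfun2" where
  "evalP P y = poly (map_poly const2 P) y"

text \<open>Palindromic: P(z) = z^d P(1/z) with d = deg P, i.e. symmetric coefficients.\<close>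
definition palindromic :: "'k::field poly \<Rightarrow> bool" where
  "palindromic P \<longleftrightarrow> (\<forall>i\<le>degree P. coeff P i = coeff P (degree P - i))"

inductive_set ring_gen :: "'a::comm_ring_1 set \<Rightarrow> 'a set" for S where
  one: "1 \<in> ring_gen S"
| gen: "s \<in> S \<Longrightarrow> s \<in> ring_gen S"
| add: "a \<in> ring_gen S \<Longrightarrow> b \<in> ring_gen S \<Longrightarrow> a + b \<in> ring_gen S"
| neg: "a \<in> ring_gen S \<Longrightarrow> - a \<in> ring_gen S"
| mult: "a \<in> ring_gen S \<Longrightarrow> b \<in> ring_gen S \<Longrightarrow> a * b \<in> ring_gen S"

definition kbar :: "'k::field poly \<Rightarrow> 'k poly \<Rightarrow> 'k set" where
  "kbar P1 P2 = ring_gen (range (coeff P1) \<union> range (coeff P2))"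

text \<open>The polynomial used in the exchange relation at index k:
  x_{k+1} x_{k-1} = P1(x_k) if k even, P2(x_k) if k odd.\<close>
definition Psel :: "'k::field poly \<Rightarrow> 'k poly \<Rightarrow> int \<Rightarrow> 'k poly" where
  "Psel P1 P2 k = (if even k then P1 else P2)"

text \<open>fwd n = (x_{n+1}, x_{n+2}).\<close>
fun fwd :: "'k::field poly \<Rightarrow> 'k poly \<Rightarrow> nat \<Rightarrow> 'k ratfun2 \<times> 'k ratfun2" where
  "fwd P1 P2 0 = (X1, X2)"
| "fwd P1 P2 (Suc n) = (let (a, b) = fwd P1 P2 n in
     (b, evalP (Psel P1 P2 (int n + 2)) b / a))"

text \<open>bwd n = (x_{1-n}, x_{2-n}).\<close>
fun bwd :: "'k::field poly \<Rightarrow> 'k poly \<Rightarrow> nat \<Rightarrow> 'k ratfun2 \<times> 'k ratfun2" where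
  "bwd P1 P2 0 = (X1, X2)"
| "bwd P1 P2 (Suc n) = (let (a, b) = bwd P1 P2 n in
     (evalP (Psel P1 P2 (1 - int n)) a / b, a))"

definition xseq :: "'k::field poly \<Rightarrow> 'k poly \<Rightarrow> int \<Rightarrow> 'k ratfun2" where
  "xseq P1 P2 k = (if k \<ge> 1 then fst (fwd P1 P2 (nat (k - 1)))
                   else fst (bwd P1 P2 (nat (1 - k))))"

definition clusterA :: "'k::field poly \<Rightarrow> 'k poly \<Rightarrow> 'k ratfun2 set" where
  "clusterA P1 P2 = ring_gen (const2 ` kbar P1 P2 \<union> range (xseq P1 P2))"

definition Tk :: "'k::field poly \<Rightarrow> 'k poly \<Rightarrow> int \<Rightarrow> 'k ratfun2 set" where
  "Tk P1 P2 k = ring_gen (const2 ` kbar P1 P2 \<union>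
     {xseq P1 P2 k, inverse (xseq P1 P2 k), xseq P1 P2 (k + 1), inverse (xseq P1 P2 (k + 1))})"

end

theory Submission
  imports Defs "HOL-Computational_Algebra.Polynomial_Factorial"
begin

text \<open>
  The proof follows the lower/upper bound strategy for cluster algebras. Let \<open>P, Q\<close> have
  coefficients in \<open>R\<close> and constant term \<open>1\<close>, and let \<open>a, b\<close> be algebraically independent with
  neighbours \<open>c = Q(b)/a\<close> and \<open>d = P(a)/b\<close>. Then
  \<open>R[a\<^sup>\<plusminus>\<^sup>1, b\<^sup>\<plusminus>\<^sup>1] \<inter> R[b\<^sup>\<plusminus>\<^sup>1, c\<^sup>\<plusminus>\<^sup>1] \<inter> R[d\<^sup>\<plusminus>\<^sup>1, a\<^sup>\<plusminus>\<^sup>1] \<subseteq> R[a, b, c, d]\<close>.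
  Substituting \<open>(a, b)\<close> for \<open>(x\<^sub>1, x\<^sub>2)\<close> reduces this to \<open>a = x\<^sub>1, b = x\<^sub>2\<close>, where an element
  \<open>g/(x\<^sub>1\<^sup>N x\<^sub>2\<^sup>s)\<close> of the intersection is reduced by induction on \<open>s\<close>: membership in
  \<open>R[d\<^sup>\<plusminus>\<^sup>1, x\<^sub>1\<^sup>\<plusminus>\<^sup>1]\<close> forces \<open>P(x\<^sub>1)\<^sup>s\<close> to divide the \<open>x\<^sub>2\<close>-free part of \<open>g\<close>, which can
  then be written as \<open>d\<^sup>s H\<close> modulo \<open>x\<^sub>2\<close>, with \<open>H \<in> R[x\<^sub>1, c]\<close>.

  Applied to \<open>a = x\<^sub>m, b = x\<^sub>m\<^sub>+\<^sub>1\<close> this gives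
  \<open>T\<^sub>m\<^sub>-\<^sub>1 \<inter> T\<^sub>m \<inter> T\<^sub>m\<^sub>+\<^sub>1 \<subseteq> R[x\<^sub>m\<^sub>-\<^sub>1, x\<^sub>m, x\<^sub>m\<^sub>+\<^sub>1, x\<^sub>m\<^sub>+\<^sub>2]\<close>, the converse inclusion being clear.
  Since the exchange polynomials are palindromic with constant term \<open>1\<close>, three consecutive
  exchanges stay Laurent; hence \<open>x\<^sub>m\<^sub>+\<^sub>3\<close> and \<open>x\<^sub>m\<^sub>-\<^sub>2\<close> lie in the relevant intersections, the ring
  \<open>R[x\<^sub>m\<^sub>-\<^sub>1, x\<^sub>m, x\<^sub>m\<^sub>+\<^sub>1, x\<^sub>m\<^sub>+\<^sub>2]\<close> does not depend on \<open>m\<close>, and it therefore equals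
  \<open>\<A>(P\<^sub>1, P\<^sub>2)\<close>, which thus lies in every \<open>T\<^sub>k\<close>.
\<close>

section \<open>Polynomial evaluation in the rational function field\<close>

lemma to_fract_power: "to_fract (p ^ n) = to_fract p ^ n"
  by (induct n) simp_all

lemma to_fract_monom: "to_fract (monom c n) = to_fract [:c:] * to_fract [:0, 1:] ^ n"
proof -
  have m: "monom c n = [:c:] * [:0, 1:] ^ n" by (simp add: monom_altdef)
  show ?thesis by (simp only: m to_fract_mult to_fract_power)
qed

lemma const2_conv_to_fract: "const2 c = to_fract [:[:c:]:]"
  by (simp add: const2_def to_fract_def)

lemma X1_conv_to_fract: "X1 = to_fract [:[:0, 1:]:]"
  by (simp add: X1_def to_fract_def)

lemma X2_conv_to_fract: "X2 = to_fract [:0, 1:]"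
  by (simp add: X2_def to_fract_def)

lemma X1_nonzero: "X1 \<noteq> 0" and X2_nonzero: "X2 \<noteq> 0"
  by (simp_all add: X1_conv_to_fract X2_conv_to_fract)

lemma const2_0 [simp]: "const2 0 = 0"
  and const2_1 [simp]: "const2 1 = 1"
  by (simp_all add: const2_conv_to_fract pCons_one)

lemma const2_add: "const2 (a + b) = const2 a + const2 b"
  and const2_mult: "const2 (a * b) = const2 a * const2 b"
  and const2_eq_iff: "const2 a = const2 b \<longleftrightarrow> a = b"
  by (simp_all add: const2_conv_to_fract flip: to_fract_add to_fract_mult)

lemma map_poly_add_hom:
  assumes "h 0 = 0" "\<And>a b. h (a + b) = h a + h b"
  shows "map_poly h (p + q) = map_poly h p + map_poly h q"
  by (rule poly_eqI) (simp add: coeff_map_poly assms)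

lemma map_poly_mult_hom:
  fixes h :: "'a::comm_ring_1 \<Rightarrow> 'b::comm_ring_1"
  assumes "h 0 = 0" "\<And>a b. h (a + b) = h a + h b" "\<And>a b. h (a * b) = h a * h b"
  shows "map_poly h (p * q) = map_poly h p * map_poly h q"
  by (rule poly_eqI)
    (simp add: coeff_map_poly coeff_mult assms(1,3) o_def flip: sum_comp_morphism[of h, OF assms(1,2)])

lemma evalP_0 [simp]: "evalP 0 u = 0"
  by (simp add: evalP_def)

lemma evalP_pCons: "evalP (pCons c q) u = const2 c + u * evalP q u"
  by (simp add: evalP_def map_poly_pCons)

lemma evalP_const [simp]: "evalP [:c:] u = const2 c"
  by (simp add: evalP_pCons)

lemma evalP_add: "evalP (p + q) u = evalP p u + evalP q u"
  by (simp add: evalP_def map_poly_add_hom const2_add)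

lemma evalP_mult: "evalP (p * q) u = evalP p u * evalP q u"
  by (simp add: evalP_def map_poly_mult_hom const2_add const2_mult)

lemma evalP_1 [simp]: "evalP 1 u = 1"
  using evalP_const[of 1 u] by (simp add: pCons_one)

lemma evalP_power: "evalP (p ^ n) u = evalP p u ^ n"
  by (induct n) (simp_all add: evalP_mult)

lemma evalP_X1: "evalP q X1 = to_fract [:q:]"
proof (induct q)
  case (pCons c q)
  have "[:pCons c q:] = [:[:c:]:] + [:[:0, 1:]:] * [:q:]" by simp
  then have "to_fract [:pCons c q:] = to_fract [:[:c:]:] + to_fract [:[:0, 1:]:] * to_fract [:q:]"
    by (simp only: to_fract_add to_fract_mult)
  then show ?case
    by (simp only: evalP_pCons pCons(2)[unfolded X1_conv_to_fract] const2_conv_to_fract X1_conv_to_fract)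
qed simp

text \<open>\<open>eval2 p u v = p(u, v)\<close>, the outer variable of \<open>p\<close> being \<open>x\<^sub>2\<close>.\<close>

definition eval2 :: "'k::field poly poly \<Rightarrow> 'k ratfun2 \<Rightarrow> 'k ratfun2 \<Rightarrow> 'k ratfun2" where
  "eval2 p u v = poly (map_poly (\<lambda>q. evalP q u) p) v"

lemma eval2_0 [simp]: "eval2 0 u v = 0"
  by (simp add: eval2_def)

lemma eval2_pCons: "eval2 (pCons q p) u v = evalP q u + v * eval2 p u v"
  by (simp add: eval2_def map_poly_pCons)

lemma eval2_const [simp]: "eval2 [:q:] u v = evalP q u"
  by (simp add: eval2_pCons)

lemma eval2_1 [simp]: "eval2 1 u v = 1"
  using eval2_const[of 1 u v] by (simp add: pCons_one)

lemma evalP_X [simp]: "evalP [:0, 1:] u = u"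
  by (simp add: evalP_pCons)

lemma eval2_X1 [simp]: "eval2 [:[:0, 1:]:] u v = u"
  and eval2_X2 [simp]: "eval2 [:0, 1:] u v = v"
  by (simp_all add: eval2_pCons)

lemma eval2_add: "eval2 (p + q) u v = eval2 p u v + eval2 q u v"
  by (simp add: eval2_def map_poly_add_hom evalP_add)

lemma eval2_mult: "eval2 (p * q) u v = eval2 p u v * eval2 q u v"
  by (simp add: eval2_def map_poly_mult_hom evalP_add evalP_mult)

lemma eval2_minus: "eval2 (- p) u v = - eval2 p u v"
  using eval2_add[of p "- p" u v] by (simp add: eq_neg_iff_add_eq_0 add.commute)

lemma eval2_X1_X2: "eval2 p X1 X2 = to_fract p"
proof (induct p)
  case (pCons q p)
  have "pCons q p = [:q:] + [:0, 1:] * p" by simp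
  then have "to_fract (pCons q p) = to_fract [:q:] + to_fract [:0, 1:] * to_fract p"
    by (simp only: to_fract_add to_fract_mult)
  then show ?case
    by (simp only: eval2_pCons evalP_X1 pCons(2)[unfolded X2_conv_to_fract] X2_conv_to_fract)
qed simp

lemma degree_map_poly_le: "f 0 = 0 \<Longrightarrow> degree (map_poly f p) \<le> degree p"
  by (rule degree_le) (simp add: coeff_map_poly coeff_eq_0)

lemma poly_eq_sum_le:
  fixes x :: "'a::comm_semiring_1"
  assumes "degree p \<le> D"
  shows "poly p x = (\<Sum>i\<le>D. coeff p i * x ^ i)"
proof -
  have "poly p x = (\<Sum>i\<le>degree p. coeff p i * x ^ i)" by (rule poly_altdef)
  also have "\<dots> = (\<Sum>i\<le>D. coeff p i * x ^ i)"
    by (rule sum.mono_neutral_left) (use assms in \<open>auto simp: coeff_eq_0\<close>)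
  finally show ?thesis .
qed

lemma eval2_eq_sum:
  assumes "degree p \<le> D"
  shows "eval2 p u v = (\<Sum>j\<le>D. evalP (coeff p j) u * v ^ j)"
proof -
  have "degree (map_poly (\<lambda>q. evalP q u) p) \<le> D"
    using degree_map_poly_le[of "\<lambda>q. evalP q u" p] assms by simp
  then show ?thesis by (simp add: eval2_def poly_eq_sum_le coeff_map_poly)
qed

section \<open>Subrings and polynomials with coefficients in a subring\<close>

definition subring :: "'a::comm_ring_1 set \<Rightarrow> bool" where
  "subring R \<longleftrightarrow> 1 \<in> R \<and> (\<forall>a\<in>R. \<forall>b\<in>R. a + b \<in> R \<and> a * b \<in> R) \<and> (\<forall>a\<in>R. - a \<in> R)"

lemma subring_1: "subring R \<Longrightarrow> 1 \<in> R"
  and subring_add: "subring R \<Longrightarrow> a \<in> R \<Longrightarrow> b \<in> R \<Longrightarrow> a + b \<in> R"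
  and subring_mult: "subring R \<Longrightarrow> a \<in> R \<Longrightarrow> b \<in> R \<Longrightarrow> a * b \<in> R"
  and subring_uminus: "subring R \<Longrightarrow> a \<in> R \<Longrightarrow> - a \<in> R"
  unfolding subring_def by blast+

lemma subring_0: "subring R \<Longrightarrow> 0 \<in> R"
  by (metis add.right_inverse subring_1 subring_add subring_uminus)

lemma subring_diff: "subring R \<Longrightarrow> a \<in> R \<Longrightarrow> b \<in> R \<Longrightarrow> a - b \<in> R"
  by (metis diff_conv_add_uminus subring_add subring_uminus)

lemma subring_power: "subring R \<Longrightarrow> a \<in> R \<Longrightarrow> a ^ n \<in> R"
  by (induct n) (simp_all add: subring_1 subring_mult)

lemma subring_sum: "subring R \<Longrightarrow> (\<And>x. x \<in> A \<Longrightarrow> f x \<in> R) \<Longrightarrow> sum f A \<in> R"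
  by (induct A rule: infinite_finite_induct) (simp_all add: subring_0 subring_add)

lemma subring_ring_gen: "subring (ring_gen S)"
  by (simp add: subring_def ring_gen.intros)

lemma ring_gen_least:
  assumes "subring R" "S \<subseteq> R"
  shows "ring_gen S \<subseteq> R"
proof
  fix x assume "x \<in> ring_gen S"
  then show "x \<in> R"
    by induct (use assms in \<open>auto simp: subring_1 subring_add subring_mult subring_uminus\<close>)
qed

lemma ring_gen_subset: "S \<subseteq> ring_gen T \<Longrightarrow> ring_gen S \<subseteq> ring_gen T"
  by (rule ring_gen_least[OF subring_ring_gen])

lemma ring_gen_mono: "S \<subseteq> T \<Longrightarrow> ring_gen S \<subseteq> ring_gen T"
  by (rule ring_gen_subset) (auto intro: ring_gen.gen)

lemma ring_gen_image:
  assumes "h 1 = 1" "\<And>a b. h (a + b) = h a + h b" "\<And>a. h (- a) = - h a"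
    "\<And>a b. h (a * b) = h a * h b"
  shows "h ` ring_gen S = ring_gen (h ` S)"
proof
  have "subring {x. h x \<in> ring_gen (h ` S)}"
    by (simp add: subring_def assms ring_gen.intros)
  then show "h ` ring_gen S \<subseteq> ring_gen (h ` S)"
    using ring_gen_least[of "{x. h x \<in> ring_gen (h ` S)}" S] by (auto intro: ring_gen.gen)
  have "subring (h ` ring_gen S)"
    unfolding subring_def
  proof (intro conjI ballI)
    show "1 \<in> h ` ring_gen S" using assms(1) ring_gen.one by (metis imageI)
    fix a b assume "a \<in> h ` ring_gen S" "b \<in> h ` ring_gen S"
    then obtain x y where "x \<in> ring_gen S" "y \<in> ring_gen S" "a = h x" "b = h y" by auto
    then show "a + b \<in> h ` ring_gen S" "a * b \<in> h ` ring_gen S" "- a \<in> h ` ring_gen S"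
      by (metis assms(2) imageI ring_gen.add, metis assms(4) imageI ring_gen.mult,
          metis assms(3) imageI ring_gen.neg)
  qed
  then show "ring_gen (h ` S) \<subseteq> h ` ring_gen S"
    by (rule ring_gen_least) (auto intro: ring_gen.gen)
qed

definition poly_over :: "'a::comm_ring_1 set \<Rightarrow> 'a poly \<Rightarrow> bool" where
  "poly_over R q \<longleftrightarrow> (\<forall>i. coeff q i \<in> R)"

abbreviation poly2_over :: "'a::comm_ring_1 set \<Rightarrow> 'a poly poly \<Rightarrow> bool" where
  "poly2_over R \<equiv> poly_over (Collect (poly_over R))"

lemma poly_over_pCons: "poly_over R (pCons c q) \<longleftrightarrow> c \<in> R \<and> poly_over R q"
  unfolding poly_over_def by (metis coeff_pCons_0 coeff_pCons_Suc not0_implies_Suc)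

lemma poly_over_0: "subring R \<Longrightarrow> poly_over R 0"
  by (simp add: poly_over_def subring_0)

lemma poly_over_const: "subring R \<Longrightarrow> c \<in> R \<Longrightarrow> poly_over R [:c:]"
  by (simp add: poly_over_pCons poly_over_0)

lemma poly_over_X: "subring R \<Longrightarrow> poly_over R [:0, 1:]"
  by (simp add: poly_over_pCons poly_over_0 subring_0 subring_1)

lemma subring_poly_over:
  assumes "subring R"
  shows "subring (Collect (poly_over R))"
proof -
  have "poly_over R 1"
    using assms by (simp add: poly_over_def coeff_1 subring_0 subring_1)
  moreover have "poly_over R (p + q) \<and> poly_over R (p * q)"
    if "poly_over R p" "poly_over R q" for p q
    using that assms
    by (simp add: poly_over_def coeff_mult subring_add subring_mult subring_sum)
  moreover have "poly_over R (- p)" if "poly_over R p" for p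
    using that assms by (simp add: poly_over_def subring_uminus)
  ultimately show ?thesis unfolding subring_def by blast
qed

lemma poly_over_1: "subring R \<Longrightarrow> poly_over R 1"
  and poly_over_add: "subring R \<Longrightarrow> poly_over R p \<Longrightarrow> poly_over R q \<Longrightarrow> poly_over R (p + q)"
  and poly_over_mult: "subring R \<Longrightarrow> poly_over R p \<Longrightarrow> poly_over R q \<Longrightarrow> poly_over R (p * q)"
  and poly_over_diff: "subring R \<Longrightarrow> poly_over R p \<Longrightarrow> poly_over R q \<Longrightarrow> poly_over R (p - q)"
  and poly_over_uminus: "subring R \<Longrightarrow> poly_over R p \<Longrightarrow> poly_over R (- p)"
  and poly_over_power: "subring R \<Longrightarrow> poly_over R p \<Longrightarrow> poly_over R (p ^ n)"
  by (metis mem_Collect_eq subring_poly_over subring_1 subring_add subring_mult subring_diff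
      subring_uminus subring_power)+

lemma evalP_mem_subring:
  assumes "subring S" "const2 ` R \<subseteq> S" "u \<in> S" "poly_over R q"
  shows "evalP q u \<in> S"
  using assms(4)
  by (induct q) (use assms(1-3) in \<open>auto simp: evalP_pCons poly_over_pCons subring_0
      intro!: subring_add subring_mult\<close>)

lemma eval2_mem_subring:
  assumes "subring S" "const2 ` R \<subseteq> S" "u \<in> S" "v \<in> S" "poly2_over R p"
  shows "eval2 p u v \<in> S"
  using assms(5)
proof (induct p)
  case (pCons c p)
  then have "evalP c u \<in> S" "eval2 p u v \<in> S"
    using evalP_mem_subring[OF assms(1-3)] by (simp_all add: poly_over_pCons)
  then show ?case
    using assms(1,4) by (simp add: eval2_pCons subring_add subring_mult)
qed (simp add: assms(1) subring_0)

section \<open>Substitution homomorphisms of \<open>k(x\<^sub>1, x\<^sub>2)\<close>\<close>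

definition alg_indep :: "'k::field ratfun2 \<Rightarrow> 'k ratfun2 \<Rightarrow> bool" where
  "alg_indep u v \<longleftrightarrow> (\<forall>p. eval2 p u v = 0 \<longrightarrow> p = 0)"

text \<open>For algebraically independent \<open>u, v\<close> this is the field endomorphism
  \<open>x\<^sub>1 \<mapsto> u, x\<^sub>2 \<mapsto> v\<close>; the choice of representing fraction does not matter.\<close>

definition subst2 :: "'k::field ratfun2 \<Rightarrow> 'k ratfun2 \<Rightarrow> 'k ratfun2 \<Rightarrow> 'k ratfun2" where
  "subst2 u v x = (let r = (SOME r. snd r \<noteq> 0 \<and> x = Fract (fst r) (snd r))
                   in eval2 (fst r) u v / eval2 (snd r) u v)"

lemma alg_indep_nonzero:
  assumes "alg_indep u v"
  shows "u \<noteq> 0" "v \<noteq> 0"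
  using assms eval2_X1[of u v] eval2_X2[of u v] unfolding alg_indep_def by fastforce+

lemma subst2_Fract_nonzero:
  assumes indep: "alg_indep u v" and "b \<noteq> 0"
  shows "subst2 u v (Fract a b) = eval2 a u v / eval2 b u v"
proof -
  define r where "r = (SOME r. snd r \<noteq> 0 \<and> Fract a b = Fract (fst r) (snd r))"
  have "\<exists>r. snd r \<noteq> 0 \<and> Fract a b = Fract (fst r) (snd r)"
    using \<open>b \<noteq> 0\<close> by (intro exI[of _ "(a, b)"]) simp
  then have r: "snd r \<noteq> 0 \<and> Fract a b = Fract (fst r) (snd r)"
    unfolding r_def by (rule someI_ex)
  then have "a * snd r = fst r * b"
    using \<open>b \<noteq> 0\<close> eq_fract(1)[of b "snd r" a "fst r"] by simp
  then have "eval2 a u v * eval2 (snd r) u v = eval2 (fst r) u v * eval2 b u v"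
    by (metis eval2_mult)
  moreover have "eval2 b u v \<noteq> 0" "eval2 (snd r) u v \<noteq> 0"
    using indep \<open>b \<noteq> 0\<close> r unfolding alg_indep_def by blast+
  ultimately have "eval2 (fst r) u v / eval2 (snd r) u v = eval2 a u v / eval2 b u v"
    by (simp add: divide_eq_eq eq_divide_eq mult.commute)
  moreover have "subst2 u v (Fract a b) = eval2 (fst r) u v / eval2 (snd r) u v"
    unfolding subst2_def r_def Let_def ..
  ultimately show ?thesis by simp
qed

lemma subst2_Fract:
  assumes "alg_indep u v"
  shows "subst2 u v (Fract a b) = eval2 a u v / eval2 b u v"
proof (cases "b = 0")
  case True
  then have "Fract a b = Fract 0 1" by (simp add: eq_fract)
  then show ?thesis
    using True subst2_Fract_nonzero[OF assms, of 1 0] by simp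
qed (rule subst2_Fract_nonzero[OF assms])

lemma subst2_to_fract: "alg_indep u v \<Longrightarrow> subst2 u v (to_fract p) = eval2 p u v"
  by (simp add: to_fract_def subst2_Fract)

lemma subst2_0 [simp]: "alg_indep u v \<Longrightarrow> subst2 u v 0 = 0"
  and subst2_1 [simp]: "alg_indep u v \<Longrightarrow> subst2 u v 1 = 1"
  and subst2_X1 [simp]: "alg_indep u v \<Longrightarrow> subst2 u v X1 = u"
  and subst2_X2 [simp]: "alg_indep u v \<Longrightarrow> subst2 u v X2 = v"
  and subst2_const2 [simp]: "alg_indep u v \<Longrightarrow> subst2 u v (const2 c) = const2 c"
  using subst2_to_fract[of u v 0] subst2_to_fract[of u v 1]
  by (simp_all add: X1_conv_to_fract X2_conv_to_fract const2_conv_to_fract subst2_to_fract)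

lemma subst2_add:
  assumes "alg_indep u v"
  shows "subst2 u v (x + y) = subst2 u v x + subst2 u v y"
proof -
  obtain a b c d where xy: "x = Fract a b" "b \<noteq> 0" "y = Fract c d" "d \<noteq> 0"
    by (cases x, cases y) blast
  then have "eval2 b u v \<noteq> 0" "eval2 d u v \<noteq> 0"
    using assms unfolding alg_indep_def by blast+
  then show ?thesis
    using xy assms by (simp add: subst2_Fract eval2_add eval2_mult add_frac_eq)
qed

lemma subst2_mult: "alg_indep u v \<Longrightarrow> subst2 u v (x * y) = subst2 u v x * subst2 u v y"
  by (cases x, cases y) (simp add: subst2_Fract eval2_mult)

lemma subst2_uminus: "alg_indep u v \<Longrightarrow> subst2 u v (- x) = - subst2 u v x"
  by (cases x) (simp add: subst2_Fract eval2_minus)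

lemma subst2_inverse: "alg_indep u v \<Longrightarrow> subst2 u v (inverse x) = inverse (subst2 u v x)"
  by (cases x) (simp add: subst2_Fract)

lemma subst2_diff: "alg_indep u v \<Longrightarrow> subst2 u v (x - y) = subst2 u v x - subst2 u v y"
  by (metis diff_conv_add_uminus subst2_add subst2_uminus)

lemma subst2_divide: "alg_indep u v \<Longrightarrow> subst2 u v (x / y) = subst2 u v x / subst2 u v y"
  by (metis divide_inverse subst2_mult subst2_inverse)

lemma subst2_power: "alg_indep u v \<Longrightarrow> subst2 u v (x ^ n) = subst2 u v x ^ n"
  by (induct n) (simp_all add: subst2_mult)

lemma subst2_evalP: "alg_indep u v \<Longrightarrow> subst2 u v (evalP q x) = evalP q (subst2 u v x)"
  by (induct q) (simp_all add: evalP_pCons subst2_add subst2_mult)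

lemma subst2_eval2: "alg_indep u v \<Longrightarrow> subst2 u v (eval2 p x y) = eval2 p (subst2 u v x) (subst2 u v y)"
  by (induct p) (simp_all add: eval2_pCons subst2_add subst2_mult subst2_evalP)

lemma inj_subst2:
  assumes "alg_indep u v"
  shows "inj (subst2 u v)"
proof (rule injI)
  fix x y assume "subst2 u v x = subst2 u v y"
  then have "subst2 u v (x - y) = 0"
    by (simp add: subst2_diff[OF assms])
  moreover obtain a b where ab: "x - y = Fract a b" "b \<noteq> 0"
    by (cases "x - y")
  moreover have "eval2 b u v \<noteq> 0"
    using assms ab(2) unfolding alg_indep_def by blast
  ultimately have "eval2 a u v = 0"
    by (simp add: subst2_Fract[OF assms])
  then have "a = 0"
    using assms unfolding alg_indep_def by blast
  then have "x - y = 0"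
    by (simp add: ab(1) fract_collapse)
  then show "x = y" by simp
qed

lemma alg_indep_X1_X2: "alg_indep X1 X2"
  by (simp add: alg_indep_def eval2_X1_X2)

lemma alg_indep_subst2:
  assumes "alg_indep u v" "alg_indep a b"
  shows "alg_indep (subst2 u v a) (subst2 u v b)"
  unfolding alg_indep_def
proof (intro allI impI)
  fix p assume "eval2 p (subst2 u v a) (subst2 u v b) = 0"
  then have "subst2 u v (eval2 p a b) = subst2 u v 0"
    using assms(1) by (simp add: subst2_eval2)
  then have "eval2 p a b = 0"
    by (rule injD[OF inj_subst2[OF assms(1)]])
  then show "p = 0"
    using assms(2) unfolding alg_indep_def by blast
qed

lemma subst2_subst2_inverse:
  assumes "alg_indep u v" "alg_indep a b" "subst2 a b u = X1" "subst2 a b v = X2"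
  shows "subst2 a b (subst2 u v x) = x"
proof (cases x)
  case (Fract p q)
  then have "subst2 a b (subst2 u v x) = eval2 p X1 X2 / eval2 q X1 X2"
    using assms by (simp add: subst2_Fract subst2_divide subst2_eval2)
  also have "\<dots> = x"
    by (simp only: eval2_X1_X2 Fract(1) Fract_conv_to_fract)
  finally show ?thesis .
qed

lemma subst2_ring_gen:
  assumes "alg_indep u v"
  shows "subst2 u v ` ring_gen S = ring_gen (subst2 u v ` S)"
  by (rule ring_gen_image) (simp_all add: assms subst2_add subst2_uminus subst2_mult)

section \<open>The exchange substitutions preserve algebraic independence\<close>

definition poly_in_X2 :: "'k::field poly \<Rightarrow> 'k poly poly" where
  "poly_in_X2 q = map_poly (\<lambda>c. [:c:]) q"

definition swap_vars :: "'k::field poly poly \<Rightarrow> 'k poly poly" where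
  "swap_vars p = poly (map_poly poly_in_X2 p) [:[:0, 1:]:]"

lemma evalP_X2: "evalP q X2 = to_fract (poly_in_X2 q)"
proof (induct q)
  case (pCons c q)
  have "poly_in_X2 (pCons c q) = [:[:c:]:] + [:0, 1:] * poly_in_X2 q"
    by (simp add: poly_in_X2_def map_poly_pCons)
  then have "to_fract (poly_in_X2 (pCons c q)) =
      to_fract [:[:c:]:] + to_fract [:0, 1:] * to_fract (poly_in_X2 q)"
    by (simp only: to_fract_add to_fract_mult)
  then show ?case
    by (simp only: evalP_pCons pCons(2)[unfolded X2_conv_to_fract] const2_conv_to_fract X2_conv_to_fract)
qed (simp add: poly_in_X2_def)

lemma coeff_coeff_poly_in_X2: "coeff (coeff (poly_in_X2 q) i) j = (if j = 0 then coeff q i else 0)"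
  by (simp add: poly_in_X2_def coeff_map_poly coeff_pCons split: nat.split)

lemma swap_vars_pCons: "swap_vars (pCons q p) = poly_in_X2 q + [:[:0, 1:]:] * swap_vars p"
  by (simp add: swap_vars_def map_poly_pCons poly_in_X2_def)

lemma eval2_X2_X1: "eval2 p X2 X1 = to_fract (swap_vars p)"
proof (induct p)
  case (pCons q p)
  show ?case
    by (simp only: swap_vars_pCons eval2_pCons evalP_X2 pCons(2)[unfolded X1_conv_to_fract] X1_conv_to_fract
        to_fract_add to_fract_mult)
qed (simp add: swap_vars_def)

lemma coeff_swap_vars_pCons:
  "coeff (swap_vars (pCons q p)) i = coeff (poly_in_X2 q) i + pCons 0 (coeff (swap_vars p) i)"
  by (simp add: swap_vars_pCons)

lemma coeff_coeff_swap_vars: "coeff (coeff (swap_vars p) i) j = coeff (coeff p j) i"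
proof (induct p arbitrary: j)
  case (pCons q p)
  show ?case
    using pCons(2) by (cases j) (simp_all add: coeff_swap_vars_pCons coeff_coeff_poly_in_X2)
qed (simp add: swap_vars_def)

lemma alg_indep_X2_X1: "alg_indep (X2 :: 'k::field ratfun2) X1"
  unfolding alg_indep_def
proof (intro allI impI)
  fix p :: "'k poly poly"
  assume "eval2 p X2 X1 = 0"
  then have "swap_vars p = 0" by (simp add: eval2_X2_X1)
  then have "coeff (coeff p j) i = 0" for i j
    by (metis coeff_coeff_swap_vars coeff_0)
  then show "p = 0"
    by (metis coeff_0 poly_eqI)
qed

lemma alg_indep_commute:
  assumes "alg_indep u v"
  shows "alg_indep v u"
proof -
  have "alg_indep (subst2 u v X2) (subst2 u v X1)"
    by (rule alg_indep_subst2[OF assms alg_indep_X2_X1])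
  then show ?thesis using assms by simp
qed

text \<open>The numerator of \<open>g(x\<^sub>1, P(x\<^sub>1)/x\<^sub>2) x\<^sub>2\<^sup>D\<close> for \<open>deg\<^sub>x\<^sub>2 g \<le> D\<close>.\<close>

definition exchange_numerator :: "'k::field poly \<Rightarrow> 'k poly poly \<Rightarrow> nat \<Rightarrow> 'k poly poly" where
  "exchange_numerator P g D = (\<Sum>j\<le>D. monom (coeff g j * P ^ j) (D - j))"

lemma coeff_exchange_numerator:
  "coeff (exchange_numerator P g D) k = (if k \<le> D then coeff g (D - k) * P ^ (D - k) else 0)"
proof -
  have "coeff (exchange_numerator P g D) k = (\<Sum>j\<le>D. if D - j = k then coeff g j * P ^ j else 0)"
    by (simp add: exchange_numerator_def coeff_sum coeff_monom)
  also have "\<dots> = (\<Sum>j\<le>D. if j = D - k then (if k \<le> D then coeff g j * P ^ j else 0) else 0)"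
    by (rule sum.cong) auto
  finally show ?thesis by (simp add: sum.delta)
qed

lemma const_mult_poly: "[:a * b:] = [:a:] * [:b:]"
  by (simp add: mult.commute)

lemma const_power_poly: "[:a ^ n:] = [:a:] ^ n"
proof (induct n)
  case (Suc n)
  then show ?case by (simp only: power_Suc const_mult_poly)
qed (simp add: pCons_one)

lemma eval2_exchange:
  assumes "degree g \<le> D"
  shows "eval2 g X1 (evalP P X1 / X2) * X2 ^ D = to_fract (exchange_numerator P g D)"
proof -
  have "evalP (coeff g j) X1 * (evalP P X1 / X2) ^ j * X2 ^ D =
      to_fract (monom (coeff g j * P ^ j) (D - j))" if "j \<le> D" for j
  proof -
    have "X2 ^ D = X2 ^ j * X2 ^ (D - j)"
      using that by (simp flip: power_add)
    then have "(evalP P X1 / X2) ^ j * X2 ^ D = (evalP P X1 ^ j / X2 ^ j) * (X2 ^ j * X2 ^ (D - j))"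
      by (simp only: power_divide \<open>X2 ^ D = X2 ^ j * X2 ^ (D - j)\<close>)
    also have "\<dots> = evalP P X1 ^ j * X2 ^ (D - j)"
      by (simp add: X2_nonzero)
    finally have "(evalP P X1 / X2) ^ j * X2 ^ D = evalP P X1 ^ j * X2 ^ (D - j)" .
    moreover have "to_fract (monom (coeff g j * P ^ j) (D - j)) =
        evalP (coeff g j) X1 * evalP P X1 ^ j * X2 ^ (D - j)"
      by (simp only: to_fract_monom evalP_X1 const_mult_poly const_power_poly to_fract_mult
          to_fract_power X2_conv_to_fract)
    ultimately show ?thesis
      by (simp add: mult.assoc)
  qed
  then have "(\<Sum>j\<le>D. evalP (coeff g j) X1 * (evalP P X1 / X2) ^ j * X2 ^ D) =
      (\<Sum>j\<le>D. to_fract (monom (coeff g j * P ^ j) (D - j)))"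
    by (intro sum.cong) simp_all
  then show ?thesis
    by (simp add: eval2_eq_sum[OF assms] sum_distrib_right exchange_numerator_def)
qed

lemma alg_indep_X1_exchange:
  assumes "P \<noteq> 0"
  shows "alg_indep X1 (evalP P X1 / X2)"
  unfolding alg_indep_def
proof (intro allI impI)
  fix g assume "eval2 g X1 (evalP P X1 / X2) = 0"
  then have "exchange_numerator P g (degree g) = 0"
    using eval2_exchange[of g "degree g" P] by simp
  then have "coeff g j = 0" if "j \<le> degree g" for j
    using coeff_exchange_numerator[of P g "degree g" "degree g - j"] that assms by simp
  then show "g = 0" by (metis le_degree leading_coeff_0_iff order_refl)
qed

lemma alg_indep_mutation:
  assumes "alg_indep a b" "Q \<noteq> 0"
  shows "alg_indep b (evalP Q b / a)"
proof -
  have "alg_indep b a" by (rule alg_indep_commute[OF assms(1)])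
  from alg_indep_subst2[OF this alg_indep_X1_exchange[OF assms(2)]] this
  show ?thesis by (simp add: subst2_divide subst2_evalP)
qed

section \<open>Laurent rings and the three-step Laurent phenomenon\<close>

definition laurent :: "'k::field set \<Rightarrow> 'k ratfun2 \<Rightarrow> 'k ratfun2 \<Rightarrow> 'k ratfun2 set" where
  "laurent R u v = ring_gen (const2 ` R \<union> {u, inverse u, v, inverse v})"

lemma laurent_commute: "laurent R u v = laurent R v u"
  unfolding laurent_def by (simp add: insert_commute)

lemma subring_laurent: "subring (laurent R u v)"
  unfolding laurent_def by (rule subring_ring_gen)

lemma const2_image_subset_laurent: "const2 ` R \<subseteq> laurent R u v"
  unfolding laurent_def by (auto intro: ring_gen.gen)

lemma generators_mem_laurent:
  "u \<in> laurent R u v" "inverse u \<in> laurent R u v" "v \<in> laurent R u v" "inverse v \<in> laurent R u v"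
  unfolding laurent_def by (auto intro: ring_gen.gen)

lemma evalP_mem_laurent: "a \<in> laurent R u v \<Longrightarrow> poly_over R Q \<Longrightarrow> evalP Q a \<in> laurent R u v"
  by (rule evalP_mem_subring[OF subring_laurent const2_image_subset_laurent])

lemmas laurent_intros = subring_add[OF subring_laurent] subring_mult[OF subring_laurent]
  subring_diff[OF subring_laurent] subring_power[OF subring_laurent] generators_mem_laurent
  evalP_mem_laurent

lemma subset_laurent:
  assumes "S \<subseteq> laurent R u v"
  shows "ring_gen (const2 ` R \<union> S) \<subseteq> laurent R u v"
  using assms const2_image_subset_laurent by (intro ring_gen_least subring_laurent) blast

lemma laurent_subst2:
  assumes "alg_indep u v"
  shows "subst2 u v ` laurent R a b = laurent R (subst2 u v a) (subst2 u v b)"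
proof -
  have "subst2 u v ` (const2 ` R \<union> {a, inverse a, b, inverse b}) =
      const2 ` R \<union> {subst2 u v a, inverse (subst2 u v a), subst2 u v b, inverse (subst2 u v b)}"
    using assms by (simp add: image_Un image_image subst2_inverse)
  then show ?thesis
    unfolding laurent_def by (simp add: subst2_ring_gen[OF assms])
qed

lemma evalP_add_multiple:
  assumes "subring S" "const2 ` R \<subseteq> S" "w \<in> S" "z \<in> S" "poly_over R Q"
  shows "\<exists>t\<in>S. evalP Q (w + z) = evalP Q w + z * t"
  using assms(5)
proof (induct Q)
  case 0
  show ?case using subring_0[OF assms(1)] by auto
next
  case (pCons c Q)
  then have "poly_over R Q" by (simp add: poly_over_pCons)
  with pCons(2) obtain t where t: "t \<in> S" "evalP Q (w + z) = evalP Q w + z * t" by blast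
  have "evalP Q w \<in> S" by (rule evalP_mem_subring[OF assms(1-3) \<open>poly_over R Q\<close>])
  then have "evalP Q w + (w + z) * t \<in> S"
    using assms(1,3,4) t(1) by (intro subring_add subring_mult) auto
  moreover have "evalP (pCons c Q) (w + z) = evalP (pCons c Q) w + z * (evalP Q w + (w + z) * t)"
    by (simp add: evalP_pCons t(2) algebra_simps)
  ultimately show ?case by blast
qed

lemma evalP_palindromic:
  assumes "palindromic Q" "v \<noteq> 0"
  shows "evalP Q v = v ^ degree Q * evalP Q (inverse v)"
proof -
  define M where "M = map_poly const2 Q"
  have degree_M: "degree M = degree Q"
    unfolding M_def by (rule degree_map_poly) (metis const2_0 const2_eq_iff)
  have "reflect_poly M = M"
  proof (rule poly_eqI)
    fix n
    show "coeff (reflect_poly M) n = coeff M n"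
    proof (cases "n \<le> degree Q")
      case True
      then have "coeff Q (degree Q - n) = coeff Q n"
        using assms(1) unfolding palindromic_def by metis
      then show ?thesis
        unfolding coeff_reflect_poly degree_M using True by (simp add: M_def coeff_map_poly)
    next
      case False
      then show ?thesis
        unfolding coeff_reflect_poly degree_M by (simp add: M_def coeff_map_poly coeff_eq_0)
    qed
  qed
  then have "poly M v = v ^ degree M * poly M (inverse v)"
    using poly_reflect_poly_nz[OF assms(2), of M] by simp
  then show ?thesis
    unfolding degree_M unfolding evalP_def M_def .
qed

text \<open>One, two and three exchange steps starting from the cluster \<open>(u, v)\<close> stay inside
  \<open>R[u\<^sup>\<plusminus>\<^sup>1, v\<^sup>\<plusminus>\<^sup>1]\<close>; the third step is where the constant term \<open>1\<close> and the palindromicity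
  of the exchange polynomials are needed.\<close>

lemma laurent_exchange1:
  assumes "u \<noteq> 0" "c * u = evalP Q v" "poly_over R Q"
  shows "c \<in> laurent R u v"
proof -
  have "c = evalP Q v * inverse u" using assms(1,2) by (simp add: field_simps)
  then show ?thesis using assms(3) by (simp add: laurent_intros)
qed

lemma laurent_exchange2:
  assumes "u \<noteq> 0" "v \<noteq> 0" "c * u = evalP Q v" "d * v = evalP P c" "poly_over R Q" "poly_over R P"
  shows "d \<in> laurent R u v"
proof -
  have "d = evalP P c * inverse v" using assms(2,4) by (simp add: field_simps)
  then show ?thesis
    using laurent_exchange1[OF assms(1,3,5)] assms(6) by (simp add: laurent_intros)
qed

lemma laurent_exchange3:
  assumes nonzero: "u \<noteq> 0" "v \<noteq> 0" "c \<noteq> 0"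
    and exchange: "c * u = evalP Q v" "d * v = evalP P c" "e * c = evalP Q d"
    and over: "poly_over R Q" "poly_over R P"
    and P0: "coeff P 0 = 1" and palindromic: "palindromic Q"
  shows "e \<in> laurent R u v"
proof -
  let ?L = "laurent R u v"
  have c: "c \<in> ?L" by (rule laurent_exchange1[OF nonzero(1) exchange(1) over(1)])
  obtain P' where P': "P = pCons 1 P'" using P0 by (metis coeff_pCons_0 pCons_cases)
  define Z where "Z = inverse u * evalP P' c * inverse v"
  have Z: "Z \<in> ?L"
    unfolding Z_def using c over(2) by (simp add: P' poly_over_pCons laurent_intros)
  have "d = evalP P c * inverse v" using nonzero(2) exchange(2) by (simp add: field_simps)
  also have "\<dots> = inverse v + c * evalP P' c * inverse v"
    by (simp add: P' evalP_pCons algebra_simps)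
  also have "\<dots> = inverse v + evalP Q v * Z"
  proof -
    have "c = evalP Q v * inverse u" using nonzero(1) exchange(1) by (simp add: field_simps)
    then show ?thesis by (simp add: Z_def algebra_simps)
  qed
  finally have d: "d = inverse v + evalP Q v * Z" .
  have "evalP Q v * Z \<in> ?L" using Z over(1) by (simp add: laurent_intros)
  then obtain t where t: "t \<in> ?L" "evalP Q d = evalP Q (inverse v) + evalP Q v * Z * t"
    unfolding d by (metis evalP_add_multiple[OF subring_laurent const2_image_subset_laurent
        generators_mem_laurent(4) _ over(1)])
  \<comment> \<open>palindromicity turns \<open>Q(v\<^sup>-\<^sup>1)\<close> into \<open>Q(v) v\<^sup>-\<^sup>d\<close>, which is divisible by \<open>c\<close>\<close>
  have "evalP Q (inverse v) = evalP Q v * inverse v ^ degree Q"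
    using evalP_palindromic[OF palindromic nonzero(2)] nonzero(2)
    by (simp add: field_simps power_inverse)
  then have "e * c = c * (u * (inverse v ^ degree Q + Z * t))"
    using exchange(3) t(2) by (simp add: exchange(1)[symmetric] algebra_simps)
  then have "e = u * (inverse v ^ degree Q + Z * t)" using nonzero(3) by simp
  then show ?thesis using Z t(1) by (simp add: laurent_intros)
qed

section \<open>The intersection of three Laurent rings around the initial cluster\<close>

lemma poly2_over_const: "subring R \<Longrightarrow> poly_over R c \<Longrightarrow> poly2_over R [:c:]"
  by (simp add: poly_over_const subring_poly_over)

lemma poly2_over_X1: "subring R \<Longrightarrow> poly2_over R [:[:0, 1:]:]"
  by (simp add: poly2_over_const poly_over_X)

lemma poly2_over_X2: "subring R \<Longrightarrow> poly2_over R [:0, 1:]"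
  by (simp add: poly_over_X subring_poly_over)

lemmas poly2_over_intros = poly_over_1[OF subring_poly_over] poly_over_add[OF subring_poly_over]
  poly_over_mult[OF subring_poly_over] poly_over_diff[OF subring_poly_over]
  poly_over_uminus[OF subring_poly_over] poly_over_power[OF subring_poly_over]
  poly2_over_const poly2_over_X1 poly2_over_X2

lemma X1_X2_conv_to_fract: "X1 * X2 = to_fract ([:[:0, 1:]:] * [:0, 1:])"
  by (simp only: X1_conv_to_fract X2_conv_to_fract to_fract_mult)

lemma subring_laurent_X1_X2_repr:
  assumes "subring R"
  shows "subring {to_fract p / (X1 * X2) ^ N | p N. poly2_over R p}"
    (is "subring ?Rep")
proof -
  define d where "d = [:[:0, 1:]:] * ([:0, 1:] :: 'a poly poly)"
  have d: "X1 * X2 = to_fract d" "poly2_over R d"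
    unfolding d_def by (rule X1_X2_conv_to_fract) (intro poly2_over_intros assms)
  have nonzero: "(X1 * X2 :: 'a ratfun2) ^ n \<noteq> 0" for n
    by (simp add: X1_nonzero X2_nonzero)
  have "1 \<in> ?Rep"
    using assms by (intro CollectI exI[of _ 1] exI[of _ 0]) (simp add: poly2_over_intros)
  moreover have "a + b \<in> ?Rep \<and> a * b \<in> ?Rep" if ab: "a \<in> ?Rep" "b \<in> ?Rep" for a b
  proof -
    obtain p N q M where pq: "poly2_over R p" "a = to_fract p / (X1 * X2) ^ N"
      "poly2_over R q" "b = to_fract q / (X1 * X2) ^ M"
      using ab by blast
    have "a + b = to_fract (p * d ^ M + q * d ^ N) / (X1 * X2) ^ (N + M)"
      using nonzero[of N] nonzero[of M]
      by (simp add: pq d(1) to_fract_power field_simps power_add)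
    moreover have "a * b = to_fract (p * q) / (X1 * X2) ^ (N + M)"
      by (simp add: pq power_add)
    ultimately show ?thesis
      using pq d(2) assms by (blast intro: poly2_over_intros)
  qed
  moreover have "- a \<in> ?Rep" if a: "a \<in> ?Rep" for a
  proof -
    obtain p N where "poly2_over R p" "a = to_fract p / (X1 * X2) ^ N"
      using a by blast
    then show ?thesis
      using assms by (intro CollectI exI[of _ "- p"] exI[of _ N]) (simp add: poly2_over_intros)
  qed
  ultimately show ?thesis unfolding subring_def by blast
qed

lemma laurent_X1_X2_repr:
  assumes "subring R" "x \<in> laurent R X1 X2"
  shows "\<exists>p N. poly2_over R p \<and> x = to_fract p / (X1 * X2) ^ N"
proof -
  have "const2 ` R \<union> {X1, inverse X1, X2, inverse X2} \<subseteq>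
      {to_fract p / (X1 * X2) ^ N | p N. poly2_over R p}"
  proof -
    have "const2 c = to_fract [:[:c:]:] / (X1 * X2) ^ 0" for c
      by (simp add: const2_conv_to_fract)
    moreover have "X1 = to_fract [:[:0, 1:]:] / (X1 * X2) ^ 0"
      and "X2 = to_fract [:0, 1:] / (X1 * X2) ^ 0"
      and "inverse X1 = to_fract [:0, 1:] / (X1 * X2) ^ 1"
      and "inverse X2 = to_fract [:[:0, 1:]:] / (X1 * X2) ^ 1"
      by (simp_all add: X1_nonzero X2_nonzero field_simps flip: X1_conv_to_fract X2_conv_to_fract)
    ultimately show ?thesis
      using assms(1) by (fastforce intro: poly2_over_intros poly_over_const)
  qed
  then have "laurent R X1 X2 \<subseteq> {to_fract p / (X1 * X2) ^ N | p N. poly2_over R p}"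
    unfolding laurent_def by (rule ring_gen_least[OF subring_laurent_X1_X2_repr[OF assms(1)]])
  then show ?thesis using assms(2) by blast
qed

lemma subst2_exchange_involution:
  assumes "P \<noteq> 0"
  defines "B \<equiv> evalP P X1 / X2"
  shows "subst2 X1 B B = X2" "subst2 X1 B (subst2 X1 B x) = x"
proof -
  have indep: "alg_indep X1 B" unfolding B_def by (rule alg_indep_X1_exchange[OF assms(1)])
  have "evalP P X1 \<noteq> 0" using assms(1) by (simp add: evalP_X1)
  then show B: "subst2 X1 B B = X2"
    using indep by (simp add: B_def subst2_divide subst2_evalP X2_nonzero)
  show "subst2 X1 B (subst2 X1 B x) = x"
    by (rule subst2_subst2_inverse[OF indep indep]) (simp_all add: indep B)
qed

lemma subst2_exchange_mem_laurent:
  assumes "P \<noteq> 0" "f \<in> laurent R (evalP P X1 / X2) X1"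
  shows "subst2 X1 (evalP P X1 / X2) f \<in> laurent R X1 X2"
proof -
  let ?B = "evalP P X1 / X2"
  have indep: "alg_indep X1 ?B" by (rule alg_indep_X1_exchange[OF assms(1)])
  have "f \<in> laurent R (subst2 X1 ?B X2) (subst2 X1 ?B X1)"
    using assms(2) indep by simp
  then have "f \<in> subst2 X1 ?B ` laurent R X1 X2"
    by (simp add: laurent_subst2[OF indep] laurent_commute)
  then show ?thesis
    using subst2_exchange_involution(2)[OF assms(1)] by auto
qed

lemma coeff_mult_const_X_power:
  "coeff (a * [:c:] * [:0, 1:] ^ n) (k + n) = coeff a k * (c :: 'a::comm_ring_1)"
proof -
  have "a * [:c:] * [:0, 1:] ^ n = monom 1 n * smult c a"
    by (simp add: monom_altdef mult.commute)
  then show ?thesis by (simp add: coeff_monom_mult mult.commute[of a "monom 1 n"])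
qed

text \<open>Exchanging back along the involution \<open>x\<^sub>2 \<leftrightarrow> P(x\<^sub>1)/x\<^sub>2\<close> turns \<open>g/(x\<^sub>1\<^sup>N x\<^sub>2\<^sup>s)\<close> into
  a Laurent polynomial in \<open>x\<^sub>1, x\<^sub>2\<close>; comparing the coefficients of the highest power of
  \<open>x\<^sub>2\<close> shows that \<open>P(x\<^sub>1)\<^sup>s\<close> divides the \<open>x\<^sub>2\<close>-free part of \<open>g\<close> up to a power of \<open>x\<^sub>1\<close>.\<close>

lemma coeff0_dvd_of_mem_laurent_exchange:
  assumes R: "subring R" and "P \<noteq> 0" and "poly2_over R g"
    and f: "to_fract g / (X1 ^ N * X2 ^ s) \<in> laurent R (evalP P X1 / X2) X1"
  shows "\<exists>r M. poly_over R r \<and> coeff g 0 * [:0, 1:] ^ M = P ^ s * r * [:0, 1:] ^ N"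
proof -
  define B where "B = evalP P X1 / (X2 :: 'a ratfun2)"
  define D where "D = degree g"
  define E where "E = exchange_numerator P g D"
  have indep: "alg_indep X1 B" unfolding B_def by (rule alg_indep_X1_exchange[OF \<open>P \<noteq> 0\<close>])
  have PX: "evalP P X1 = to_fract [:P:]" by (simp add: evalP_X1)
  have PX_nonzero: "to_fract [:P:] \<noteq> (0 :: 'a ratfun2)" using \<open>P \<noteq> 0\<close> by simp
  obtain h M where h: "poly2_over R h"
    "subst2 X1 B (to_fract g / (X1 ^ N * X2 ^ s)) = to_fract h / (X1 * X2) ^ M"
    using laurent_X1_X2_repr[OF R subst2_exchange_mem_laurent[OF \<open>P \<noteq> 0\<close> f]] B_def by blast
  have "eval2 g X1 B = to_fract E / X2 ^ D"
    using eval2_exchange[of g D P] by (simp add: B_def E_def D_def field_simps X2_nonzero)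
  moreover have "subst2 X1 B (to_fract g / (X1 ^ N * X2 ^ s)) = eval2 g X1 B / (X1 ^ N * B ^ s)"
    using indep by (simp add: subst2_divide subst2_to_fract subst2_mult subst2_power)
  ultimately have "to_fract E / X2 ^ D / (X1 ^ N * (to_fract [:P:] / X2) ^ s) =
      to_fract h / (X1 * X2) ^ M"
    using h(2) by (simp add: B_def PX)
  then have "to_fract E * X2 ^ s * (X1 * X2) ^ M = to_fract h * (X2 ^ D * X1 ^ N * to_fract [:P:] ^ s)"
    using PX_nonzero by (simp add: field_simps power_divide X1_nonzero X2_nonzero)
  then have "to_fract (E * [:0, 1:] ^ s * ([:[:0, 1:]:] * [:0, 1:]) ^ M) =
      to_fract (h * ([:0, 1:] ^ D * [:[:0, 1:]:] ^ N * [:P:] ^ s))"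
    by (simp only: to_fract_mult to_fract_power X1_conv_to_fract X2_conv_to_fract)
  then have "E * [:0, 1:] ^ s * ([:[:0, 1:]:] * [:0, 1:]) ^ M =
      h * ([:0, 1:] ^ D * [:[:0, 1:]:] ^ N * [:P:] ^ s)"
    by (simp only: to_fract_eq_iff)
  then have "E * [:[:0, 1:] ^ M:] * [:0, 1:] ^ (s + M) = h * [:[:0, 1:] ^ N * P ^ s:] * [:0, 1:] ^ D"
    by (simp only: power_mult_distrib power_add const_power_poly const_mult_poly ac_simps)
  \<comment> \<open>compare the coefficients of \<open>x\<^sub>2\<^sup>D\<^sup>+\<^sup>s\<^sup>+\<^sup>M\<close>\<close>
  then have "coeff E D * [:0, 1:] ^ M = coeff h (s + M) * ([:0, 1:] ^ N * P ^ s)"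
    by (metis coeff_mult_const_X_power add.commute)
  then have "coeff g 0 * [:0, 1:] ^ M = P ^ s * coeff h (s + M) * [:0, 1:] ^ N"
    by (simp add: E_def coeff_exchange_numerator ac_simps)
  moreover have "poly_over R (coeff h (s + M))"
    using h(1) by (simp add: poly_over_def)
  ultimately show ?thesis by blast
qed

lemma cancel_X_power:
  fixes c Q r :: "'a::idom poly"
  assumes "coeff Q 0 = 1" "poly_over R r" "c * [:0, 1:] ^ M = Q ^ s * r"
  shows "\<exists>e. poly_over R e \<and> c = Q ^ s * e"
  using assms(2,3)
proof (induct M arbitrary: r)
  case (Suc M)
  have "coeff r 0 = coeff (Q ^ s * r) 0"
    using assms(1) by (simp add: coeff_mult_0 coeff_0_power)
  also have "\<dots> = coeff (c * [:0, 1:] ^ Suc M) 0"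
    by (simp only: Suc(3))
  also have "\<dots> = 0" by (simp add: coeff_mult_0 coeff_0_power)
  finally obtain r' where r': "r = pCons 0 r'" by (metis coeff_pCons_0 pCons_cases)
  then have "poly_over R r'" using Suc(2) by (simp add: poly_over_pCons)
  moreover have "c * [:0, 1:] ^ M = Q ^ s * r'"
    using Suc(3) by (simp add: r' ac_simps)
  ultimately show ?case by (rule Suc(1))
qed auto

lemma ring_gen_of_laurent_exchange:
  assumes R: "subring R" and Q: "poly_over R Q" "coeff Q 0 = 1"
    and "poly2_over R p" "to_fract p / X2 ^ s \<in> laurent R (evalP Q X1 / X2) X1"
  shows "to_fract p / X2 ^ s \<in> ring_gen (const2 ` R \<union> {X1, X2, evalP Q X1 / X2})"
  using assms(4,5)
proof (induct s arbitrary: p)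
  let ?B = "evalP Q X1 / (X2 :: 'a ratfun2)"
  let ?T = "ring_gen (const2 ` R \<union> {X1, X2, ?B})"
  have T: "subring ?T" "const2 ` R \<subseteq> ?T" "X1 \<in> ?T" "X2 \<in> ?T" "?B \<in> ?T"
    by (auto intro: subring_ring_gen ring_gen.gen)
  {
    case 0
    then show ?case
      using eval2_mem_subring[OF T(1-4) \<open>poly2_over R p\<close>] by (simp add: eval2_X1_X2)
  next
    case (Suc s)
    have "Q \<noteq> 0" using Q(2) by auto
    from Suc.prems(2) have "to_fract p / (X1 ^ 0 * X2 ^ Suc s) \<in> laurent R ?B X1" by simp
    from coeff0_dvd_of_mem_laurent_exchange[OF R \<open>Q \<noteq> 0\<close> Suc.prems(1) this]
    obtain r M where "poly_over R r" "coeff p 0 * [:0, 1:] ^ M = Q ^ Suc s * r"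
      by auto
    from cancel_X_power[OF Q(2) this]
    obtain e where e: "poly_over R e" "coeff p 0 = Q ^ Suc s * e"
      by blast
    obtain c p' where p': "p = pCons c p'" by (cases p)
    then have "poly2_over R p'" "c = Q ^ Suc s * e"
      using Suc.prems(1) e(2) by (simp_all add: poly_over_pCons)
    have "to_fract p = to_fract [:c:] + X2 * to_fract p'"
      unfolding p' X2_conv_to_fract by (simp flip: to_fract_mult to_fract_add)
    then have split: "to_fract p / X2 ^ Suc s = evalP e X1 * ?B ^ Suc s + to_fract p' / X2 ^ s"
      by (simp add: \<open>c = Q ^ Suc s * e\<close> evalP_mult evalP_power power_divide X2_nonzero
          field_simps flip: evalP_X1)
    have head: "evalP e X1 * ?B ^ Suc s \<in> laurent R ?B X1"
      using e(1) by (intro laurent_intros)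
    have "to_fract p' / X2 ^ s \<in> laurent R ?B X1"
      using subring_diff[OF subring_laurent Suc.prems(2) head] by (simp only: split add_diff_cancel_left')
    then have "to_fract p' / X2 ^ s \<in> ?T"
      by (rule Suc.hyps[OF \<open>poly2_over R p'\<close>])
    moreover have "evalP e X1 * ?B ^ Suc s \<in> ?T"
      using T e(1) by (intro subring_mult subring_power evalP_mem_subring) auto
    ultimately show ?case
      unfolding split by (rule subring_add[OF T(1), rotated])
  }
qed

lemma poly2_over_swap_vars: "poly2_over R g \<Longrightarrow> poly2_over R (swap_vars g)"
  by (simp add: poly_over_def coeff_coeff_swap_vars)

lemma subst2_swap:
  "subst2 X2 X1 X1 = X2" "subst2 X2 X1 X2 = X1" "subst2 X2 X1 (subst2 X2 X1 x) = x"
  "subst2 X2 X1 (to_fract g) = to_fract (swap_vars g)"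
  "subst2 X2 X1 (evalP Q X1 / X2) = evalP Q X2 / X1"
  by (simp_all add: alg_indep_X2_X1 subst2_subst2_inverse subst2_to_fract eval2_X2_X1
      subst2_divide subst2_evalP)

lemma ring_gen_of_laurent_exchange':
  assumes R: "subring R" and Q: "poly_over R Q" "coeff Q 0 = 1"
    and g: "poly2_over R g" and f: "to_fract g / X1 ^ N \<in> laurent R X2 (evalP Q X2 / X1)"
  shows "to_fract g / X1 ^ N \<in> ring_gen (const2 ` R \<union> {X1, X2, evalP Q X2 / X1})"
proof -
  let ?\<tau> = "subst2 X2 X1"
  have swap_f: "?\<tau> (to_fract g / X1 ^ N) = to_fract (swap_vars g) / X2 ^ N"
    by (simp add: alg_indep_X2_X1 subst2_divide subst2_power subst2_swap)
  have "?\<tau> (to_fract g / X1 ^ N) \<in> laurent R (?\<tau> X2) (?\<tau> (evalP Q X2 / X1))"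
    using f laurent_subst2[OF alg_indep_X2_X1] by blast
  also have "laurent R (?\<tau> X2) (?\<tau> (evalP Q X2 / X1)) = laurent R (evalP Q X1 / X2) X1"
    by (metis subst2_swap(2,3,5) laurent_commute)
  finally have "?\<tau> (to_fract g / X1 ^ N) \<in> ring_gen (const2 ` R \<union> {X1, X2, evalP Q X1 / X2})"
    unfolding swap_f by (rule ring_gen_of_laurent_exchange[OF R Q poly2_over_swap_vars[OF g]])
  then have "?\<tau> (?\<tau> (to_fract g / X1 ^ N)) \<in> ring_gen (?\<tau> ` (const2 ` R \<union> {X1, X2, evalP Q X1 / X2}))"
    by (metis imageI subst2_ring_gen[OF alg_indep_X2_X1])
  moreover have "?\<tau> ` (const2 ` R \<union> {X1, X2, evalP Q X1 / X2}) = const2 ` R \<union> {X1, X2, evalP Q X2 / X1}"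
    by (auto simp: alg_indep_X2_X1 image_image subst2_swap)
  ultimately show ?thesis by (simp add: subst2_swap)
qed

lemma evalP_X2_power_decomp:
  assumes R: "subring R" and Q: "poly_over R Q" "coeff Q 0 = 1"
  shows "\<exists>w. poly2_over R w \<and> evalP Q X2 ^ n = 1 + X2 * to_fract w"
proof -
  have Q': "poly2_over R (poly_in_X2 Q)"
    using Q(1) R
    by (simp add: poly_over_def poly_in_X2_def coeff_map_poly coeff_pCons subring_0 split: nat.split)
  define t where "t = poly_in_X2 Q ^ n - 1"
  have t: "poly2_over R t" unfolding t_def using R Q' by (intro poly2_over_intros)
  have "coeff (poly_in_X2 Q) 0 = 1"
    using Q(2) by (simp add: poly_in_X2_def coeff_map_poly pCons_one)
  then have "coeff t 0 = 0" by (simp add: t_def coeff_0_power)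
  then obtain w where w: "t = pCons 0 w" by (metis coeff_pCons_0 pCons_cases)
  then have "poly2_over R w" using t by (simp add: poly_over_pCons)
  have "evalP Q X2 ^ n = to_fract (poly_in_X2 Q ^ n)"
    by (simp only: evalP_X2 to_fract_power)
  also have "\<dots> = to_fract (1 + [:0, 1:] * w)"
    using w by (simp add: t_def algebra_simps)
  also have "\<dots> = 1 + X2 * to_fract w"
    by (simp only: to_fract_add to_fract_mult to_fract_1 X2_conv_to_fract)
  finally show ?thesis using \<open>poly2_over R w\<close> by blast
qed

text \<open>Modulo \<open>x\<^sub>2\<close>, division by \<open>x\<^sub>1\<close> is multiplication by \<open>A = Q(x\<^sub>2)/x\<^sub>1\<close>, since
  \<open>Q(x\<^sub>2) \<equiv> 1\<close>.\<close>

lemma divide_X1_power_mod_X2: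
  assumes R: "subring R" and Q: "poly_over R Q" "coeff Q 0 = 1" and r: "poly_over R r"
  shows "\<exists>H k N. H \<in> ring_gen (const2 ` R \<union> {X1, evalP Q X2 / X1}) \<and> poly2_over R k \<and>
    to_fract [:r:] / X1 ^ M = H + X2 * (to_fract k / X1 ^ N)"
  using r
proof (induct M arbitrary: r)
  let ?A = "evalP Q X2 / (X1 :: 'a ratfun2)"
  let ?T = "ring_gen (const2 ` R \<union> {X1, ?A})"
  have T: "subring ?T" "const2 ` R \<subseteq> ?T" "X1 \<in> ?T" "?A \<in> ?T"
    by (auto intro: subring_ring_gen ring_gen.gen)
  {
    case 0
    then have "evalP r X1 \<in> ?T" by (rule evalP_mem_subring[OF T(1-3)])
    then show ?case
      using R by (intro exI[of _ "evalP r X1"] exI[of _ 0]) (simp add: evalP_X1 poly_over_0 subring_poly_over)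
  next
    case (Suc M)
    obtain c r' where r': "r = pCons c r'" by (cases r)
    then have "poly_over R r'" "c \<in> R" using Suc.prems by (simp_all add: poly_over_pCons)
    then obtain H' k' N' where IH: "H' \<in> ?T" "poly2_over R k'"
      "to_fract [:r':] / X1 ^ M = H' + X2 * (to_fract k' / X1 ^ N')"
      using Suc.hyps by blast
    obtain w where w: "poly2_over R w" "evalP Q X2 ^ Suc M = 1 + X2 * to_fract w"
      using evalP_X2_power_decomp[OF R Q] by blast
    have "to_fract [:r:] = const2 c + X1 * to_fract [:r':]"
      unfolding r' const2_conv_to_fract X1_conv_to_fract by (simp flip: to_fract_mult to_fract_add)
    with w(2) have "to_fract [:r:] / X1 ^ Suc M = const2 c * ?A ^ Suc M + H' +
        X2 * ((to_fract k' * X1 ^ Suc M - const2 c * to_fract w * X1 ^ N') / X1 ^ (N' + Suc M))"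
      using IH(3) by (simp add: power_divide field_simps power_add X1_nonzero)
    moreover have "to_fract k' * X1 ^ Suc M - const2 c * to_fract w * X1 ^ N' =
        to_fract (k' * [:[:0, 1:]:] ^ Suc M - [:[:c:]:] * w * [:[:0, 1:]:] ^ N')"
      by (simp only: const2_conv_to_fract X1_conv_to_fract to_fract_power to_fract_diff to_fract_mult)
    moreover have "poly2_over R (k' * [:[:0, 1:]:] ^ Suc M - [:[:c:]:] * w * [:[:0, 1:]:] ^ N')"
      using IH(2) w(1) \<open>c \<in> R\<close> R by (intro poly2_over_intros poly_over_const) auto
    moreover have "const2 c * ?A ^ Suc M + H' \<in> ?T"
      using T IH(1) \<open>c \<in> R\<close> by (intro subring_add subring_mult subring_power) auto
    ultimately show ?case by metis
  }
qed

lemma exchange_mem_laurent: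
  assumes "poly_over R P" "poly_over R Q" "coeff P 0 = 1" "coeff Q 0 = 1"
  shows "evalP Q X2 / X1 \<in> laurent R (evalP P X1 / X2) X1" (is "?A \<in> laurent R ?B X1")
    and "evalP P X1 / X2 \<in> laurent R X2 (evalP Q X2 / X1)"
    and "X1 \<in> laurent R X2 (evalP Q X2 / X1)"
proof -
  have "evalP P X1 \<noteq> 0" "evalP Q X2 \<noteq> 0"
    using assms(3,4) by (auto simp: evalP_X1 evalP_X2 poly_in_X2_def coeff_map_poly dest: arg_cong[of _ _ "\<lambda>p. coeff (coeff p 0) 0"])
  then have nonzero: "?A \<noteq> 0" "?B \<noteq> 0"
    by (simp_all add: X1_nonzero X2_nonzero)
  have e1: "X2 * ?B = evalP P X1" and e2: "?A * X1 = evalP Q X2"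
    and e3: "X1 * ?A = evalP Q X2" and e4: "?B * X2 = evalP P X1"
    by (simp_all add: X1_nonzero X2_nonzero)
  show "?A \<in> laurent R ?B X1"
    by (rule laurent_exchange2[OF nonzero(2) X1_nonzero e1 e2 assms(1,2)])
  show "?B \<in> laurent R X2 ?A"
    using laurent_exchange2[OF nonzero(1) X2_nonzero e3 e4 assms(2,1)] by (simp add: laurent_commute)
  show "X1 \<in> laurent R X2 ?A"
    using laurent_exchange1[OF nonzero(1) e3 assms(2)] by (simp add: laurent_commute)
qed

lemma ring_gen_subset_laurent_neighbours:
  assumes "poly_over R P" "poly_over R Q" "coeff P 0 = 1" "coeff Q 0 = 1"
  shows "ring_gen (const2 ` R \<union> {X1, evalP Q X2 / X1, evalP P X1 / X2}) \<subseteq>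
    laurent R (evalP P X1 / X2) X1 \<inter> laurent R X2 (evalP Q X2 / X1)"
  using exchange_mem_laurent[OF assms] generators_mem_laurent
  by (intro Int_greatest subset_laurent) auto

lemma const_term_as_exchange_power:
  assumes "c * [:0, 1:] ^ M = P ^ n * r * [:0, 1:] ^ N"
  shows "to_fract [:c:] / (X1 ^ N * X2 ^ n) = (evalP P X1 / X2) ^ n * (to_fract [:r:] / X1 ^ M)"
proof -
  have "to_fract [:c * [:0, 1:] ^ M:] = to_fract [:P ^ n * r * [:0, 1:] ^ N:]"
    using assms by simp
  then have "to_fract [:c:] * X1 ^ M = to_fract [:P:] ^ n * to_fract [:r:] * X1 ^ N"
    by (simp only: const_mult_poly const_power_poly to_fract_mult to_fract_power X1_conv_to_fract)
  then have "to_fract [:c:] = to_fract [:P:] ^ n * to_fract [:r:] * X1 ^ N / X1 ^ M"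
    by (simp add: field_simps X1_nonzero)
  then show ?thesis
    by (simp add: field_simps X1_nonzero X2_nonzero power_divide evalP_X1)
qed

lemma combine_exchange_remainder:
  "to_fract g / (X1 ^ N * X2 ^ s) + (evalP P X1 / X2) ^ Suc s * X2 * (to_fract k / X1 ^ N') =
    to_fract (g * [:[:0, 1:]:] ^ N' + [:P:] ^ Suc s * k * [:[:0, 1:]:] ^ N) / (X1 ^ (N + N') * X2 ^ s)"
proof -
  have "to_fract (g * [:[:0, 1:]:] ^ N' + [:P:] ^ Suc s * k * [:[:0, 1:]:] ^ N) =
      to_fract g * X1 ^ N' + to_fract [:P:] ^ Suc s * to_fract k * X1 ^ N"
    by (simp only: to_fract_add to_fract_mult to_fract_power X1_conv_to_fract)
  moreover have "(evalP P X1 / X2) ^ Suc s = to_fract [:P:] ^ Suc s / X2 ^ Suc s"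
    by (simp add: power_divide evalP_X1)
  ultimately show ?thesis
    by (simp add: field_simps power_add X1_nonzero X2_nonzero)
qed

text \<open>One reduction step: the part of \<open>g/(x\<^sub>1\<^sup>N x\<^sub>2\<^sup>s\<^sup>+\<^sup>1)\<close> carrying the full power of
  \<open>x\<^sub>2\<^sup>-\<^sup>1\<close> is \<open>B\<^sup>s\<^sup>+\<^sup>1 H\<close> for some \<open>H \<in> R[x\<^sub>1, A]\<close>, up to a multiple of \<open>x\<^sub>2\<close>.\<close>

lemma exchange_reduction_step:
  assumes R: "subring R" and P: "poly_over R P" "P \<noteq> 0" and Q: "poly_over R Q" "coeff Q 0 = 1"
    and g: "poly2_over R g"
    and f: "to_fract g / (X1 ^ N * X2 ^ Suc s) \<in> laurent R (evalP P X1 / X2) X1"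
  shows "\<exists>H g' N'. H \<in> ring_gen (const2 ` R \<union> {X1, evalP Q X2 / X1}) \<and> poly2_over R g' \<and>
    to_fract g / (X1 ^ N * X2 ^ Suc s) - (evalP P X1 / X2) ^ Suc s * H =
      to_fract g' / (X1 ^ N' * X2 ^ s)"
proof -
  let ?B = "evalP P X1 / (X2 :: 'a ratfun2)"
  obtain r M where r: "poly_over R r" "coeff g 0 * [:0, 1:] ^ M = P ^ Suc s * r * [:0, 1:] ^ N"
    using coeff0_dvd_of_mem_laurent_exchange[OF R P(2) g f] by blast
  obtain H k N' where H: "H \<in> ring_gen (const2 ` R \<union> {X1, evalP Q X2 / X1})" "poly2_over R k"
    "to_fract [:r:] / X1 ^ M = H + X2 * (to_fract k / X1 ^ N')"
    using divide_X1_power_mod_X2[OF R Q r(1)] by blast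
  obtain g0 g' where g': "g = pCons g0 g'" by (cases g)
  then have "poly2_over R g'" using g by (simp add: poly_over_pCons)
  have to_fract_g: "to_fract g = to_fract [:g0:] + X2 * to_fract g'"
    unfolding g' X2_conv_to_fract by (simp flip: to_fract_mult to_fract_add)
  have "g0 * [:0, 1:] ^ M = P ^ Suc s * r * [:0, 1:] ^ N"
    using r(2) g' by simp
  then have head: "to_fract [:g0:] / (X1 ^ N * X2 ^ Suc s) = ?B ^ Suc s * (to_fract [:r:] / X1 ^ M)"
    by (rule const_term_as_exchange_power)
  have "to_fract g / (X1 ^ N * X2 ^ Suc s) =
      to_fract [:g0:] / (X1 ^ N * X2 ^ Suc s) + to_fract g' / (X1 ^ N * X2 ^ s)"
    unfolding to_fract_g by (simp add: field_simps X1_nonzero X2_nonzero)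
  also have "\<dots> = ?B ^ Suc s * (H + X2 * (to_fract k / X1 ^ N')) + to_fract g' / (X1 ^ N * X2 ^ s)"
    by (simp only: head H(3))
  finally have split: "to_fract g / (X1 ^ N * X2 ^ Suc s) =
      ?B ^ Suc s * (H + X2 * (to_fract k / X1 ^ N')) + to_fract g' / (X1 ^ N * X2 ^ s)" .
  have ring_eq: "x - a * h = d + a * y * c" if "x = a * (h + y * c) + d"
    for x a h y c d :: "'a ratfun2"
    using that by (simp add: algebra_simps)
  have "to_fract g / (X1 ^ N * X2 ^ Suc s) - ?B ^ Suc s * H =
      to_fract g' / (X1 ^ N * X2 ^ s) + ?B ^ Suc s * X2 * (to_fract k / X1 ^ N')"
    using split by (rule ring_eq)
  also have "\<dots> = to_fract (g' * [:[:0, 1:]:] ^ N' + [:P:] ^ Suc s * k * [:[:0, 1:]:] ^ N) /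
      (X1 ^ (N + N') * X2 ^ s)"
    by (rule combine_exchange_remainder)
  finally have "to_fract g / (X1 ^ N * X2 ^ Suc s) - ?B ^ Suc s * H = \<dots>" .
  moreover have "poly2_over R (g' * [:[:0, 1:]:] ^ N' + [:P:] ^ Suc s * k * [:[:0, 1:]:] ^ N)"
    using H(2) \<open>poly2_over R g'\<close> P(1) R by (intro poly2_over_intros)
  ultimately show ?thesis
    using H(1) by blast
qed

lemma ring_gen_of_laurent_exchanges:
  assumes R: "subring R" and PQ: "poly_over R P" "poly_over R Q" "coeff P 0 = 1" "coeff Q 0 = 1"
    and "poly2_over R g"
    and "to_fract g / (X1 ^ N * X2 ^ s) \<in> laurent R (evalP P X1 / X2) X1"
    and "to_fract g / (X1 ^ N * X2 ^ s) \<in> laurent R X2 (evalP Q X2 / X1)"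
  shows "to_fract g / (X1 ^ N * X2 ^ s) \<in>
    ring_gen (const2 ` R \<union> {X1, X2, evalP Q X2 / X1, evalP P X1 / X2})"
  using assms(6-8)
proof (induct s arbitrary: g N)
  let ?A = "evalP Q X2 / (X1 :: 'a ratfun2)"
  let ?B = "evalP P X1 / (X2 :: 'a ratfun2)"
  let ?T = "ring_gen (const2 ` R \<union> {X1, X2, ?A, ?B})"
  {
    case 0
    then have "to_fract g / X1 ^ N \<in> ring_gen (const2 ` R \<union> {X1, X2, ?A})"
      using ring_gen_of_laurent_exchange'[OF R PQ(2,4)] by simp
    also have "\<dots> \<subseteq> ?T" by (rule ring_gen_mono) auto
    finally show ?case by simp
  next
    case (Suc s)
    have "P \<noteq> 0" using PQ(3) by auto
    obtain H g' N' where H: "H \<in> ring_gen (const2 ` R \<union> {X1, ?A})" "poly2_over R g'"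
      "to_fract g / (X1 ^ N * X2 ^ Suc s) - ?B ^ Suc s * H = to_fract g' / (X1 ^ N' * X2 ^ s)"
      using exchange_reduction_step[OF R PQ(1) \<open>P \<noteq> 0\<close> PQ(2,4) Suc.prems(1,2)] by blast
    have "ring_gen (const2 ` R \<union> {X1, ?A}) \<subseteq> ring_gen (const2 ` R \<union> {X1, ?A, ?B})"
      and sub_T: "ring_gen (const2 ` R \<union> {X1, ?A, ?B}) \<subseteq> ?T"
      by (rule ring_gen_mono, blast)+
    then have "H \<in> ring_gen (const2 ` R \<union> {X1, ?A, ?B})"
      using H(1) by blast
    then have BH_ring: "?B ^ Suc s * H \<in> ring_gen (const2 ` R \<union> {X1, ?A, ?B})"
      by (intro subring_mult subring_power subring_ring_gen) (auto intro: ring_gen.gen)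
    then have BH: "?B ^ Suc s * H \<in> laurent R ?B X1 \<inter> laurent R X2 ?A"
      using ring_gen_subset_laurent_neighbours[OF PQ] by blast
    have mem1: "to_fract g / (X1 ^ N * X2 ^ Suc s) - ?B ^ Suc s * H \<in> laurent R ?B X1"
      using BH by (intro subring_diff[OF subring_laurent Suc.prems(2)]) blast
    have mem2: "to_fract g / (X1 ^ N * X2 ^ Suc s) - ?B ^ Suc s * H \<in> laurent R X2 ?A"
      using BH by (intro subring_diff[OF subring_laurent Suc.prems(3)]) blast
    from mem1 mem2
    have "to_fract g / (X1 ^ N * X2 ^ Suc s) - ?B ^ Suc s * H \<in> ?T"
      unfolding H(3) by (rule Suc.hyps[OF H(2)])
    moreover have "?B ^ Suc s * H \<in> ?T"
      using BH_ring sub_T by blast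
    ultimately have "(to_fract g / (X1 ^ N * X2 ^ Suc s) - ?B ^ Suc s * H) + ?B ^ Suc s * H \<in> ?T"
      by (rule subring_add[OF subring_ring_gen])
    then show ?case by simp
  }
qed

lemma laurent_Int_subset_ring_gen_X1_X2:
  assumes "subring R" "poly_over R P" "poly_over R Q" "coeff P 0 = 1" "coeff Q 0 = 1"
  shows "laurent R X1 X2 \<inter> laurent R X2 (evalP Q X2 / X1) \<inter> laurent R (evalP P X1 / X2) X1 \<subseteq>
    ring_gen (const2 ` R \<union> {X1, X2, evalP Q X2 / X1, evalP P X1 / X2})"
proof
  fix f assume f: "f \<in> laurent R X1 X2 \<inter> laurent R X2 (evalP Q X2 / X1) \<inter> laurent R (evalP P X1 / X2) X1"
  then obtain g N where "poly2_over R g" "f = to_fract g / (X1 ^ N * X2 ^ N)"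
    using laurent_X1_X2_repr[OF assms(1)] by (metis IntD1 power_mult_distrib)
  with f show "f \<in> ring_gen (const2 ` R \<union> {X1, X2, evalP Q X2 / X1, evalP P X1 / X2})"
    using ring_gen_of_laurent_exchanges[OF assms] by blast
qed

theorem laurent_Int_subset_ring_gen:
  assumes "subring R" "poly_over R P" "poly_over R Q" "coeff P 0 = 1" "coeff Q 0 = 1"
    and indep: "alg_indep a b"
  shows "laurent R a b \<inter> laurent R b (evalP Q b / a) \<inter> laurent R (evalP P a / b) a \<subseteq>
    ring_gen (const2 ` R \<union> {a, b, evalP Q b / a, evalP P a / b})"
proof -
  let ?\<sigma> = "subst2 a b"
  have \<sigma>: "?\<sigma> X1 = a" "?\<sigma> X2 = b" "?\<sigma> (evalP Q X2 / X1) = evalP Q b / a"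
    "?\<sigma> (evalP P X1 / X2) = evalP P a / b"
    using indep by (simp_all add: subst2_divide subst2_evalP)
  have "laurent R a b \<inter> laurent R b (evalP Q b / a) \<inter> laurent R (evalP P a / b) a =
      ?\<sigma> ` (laurent R X1 X2 \<inter> laurent R X2 (evalP Q X2 / X1) \<inter> laurent R (evalP P X1 / X2) X1)"
    by (simp add: image_Int inj_subst2[OF indep] laurent_subst2[OF indep] \<sigma>)
  also have "\<dots> \<subseteq> ?\<sigma> ` ring_gen (const2 ` R \<union> {X1, X2, evalP Q X2 / X1, evalP P X1 / X2})"
    by (rule image_mono[OF laurent_Int_subset_ring_gen_X1_X2[OF assms(1-5)]])
  also have "\<dots> = ring_gen (const2 ` R \<union> {a, b, evalP Q b / a, evalP P a / b})"
    using indep by (simp add: subst2_ring_gen image_Un image_image \<sigma>)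
  finally show ?thesis .
qed

section \<open>The sequence \<open>x\<^sub>k\<close>\<close>

lemma fwd_Suc: "fwd P1 P2 (Suc n) = (snd (fwd P1 P2 n),
    evalP (Psel P1 P2 (int n + 2)) (snd (fwd P1 P2 n)) / fst (fwd P1 P2 n))"
  by (simp add: Let_def split_beta)

lemma bwd_Suc: "bwd P1 P2 (Suc n) =
    (evalP (Psel P1 P2 (1 - int n)) (fst (bwd P1 P2 n)) / snd (bwd P1 P2 n), fst (bwd P1 P2 n))"
  by (simp add: Let_def split_beta)

lemma fwd_eq_xseq: "fwd P1 P2 n = (xseq P1 P2 (int n + 1), xseq P1 P2 (int n + 2))"
proof -
  have "fst (fwd P1 P2 n) = xseq P1 P2 (int n + 1)" for n by (simp add: xseq_def)
  moreover have "snd (fwd P1 P2 n) = fst (fwd P1 P2 (Suc n))" by (simp only: fwd_Suc fst_conv)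
  ultimately show ?thesis by (metis prod.collapse of_nat_Suc add.commute add.left_commute one_add_one)
qed

lemma bwd_eq_xseq: "bwd P1 P2 n = (xseq P1 P2 (1 - int n), xseq P1 P2 (2 - int n))"
proof -
  have fst_bwd: "fst (bwd P1 P2 n) = xseq P1 P2 (1 - int n)" for n
  proof (cases n)
    case (Suc m)
    then have "\<not> 1 - int n \<ge> 1" "nat (1 - (1 - int n)) = n" by simp_all
    then show ?thesis unfolding xseq_def by simp
  qed (simp add: xseq_def)
  have "snd (bwd P1 P2 n) = xseq P1 P2 (2 - int n)"
  proof (cases n)
    case (Suc m)
    then have "snd (bwd P1 P2 n) = fst (bwd P1 P2 m)" by (simp only: bwd_Suc snd_conv)
    then show ?thesis using fst_bwd[of m] Suc by simp
  qed (simp add: xseq_def)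
  then show ?thesis using fst_bwd by (metis prod.collapse)
qed

lemma alg_indep_xseq:
  assumes "P1 \<noteq> 0" "P2 \<noteq> 0"
  shows "alg_indep (xseq P1 P2 k) (xseq P1 P2 (k + 1))"
proof -
  have nonzero: "Psel P1 P2 k \<noteq> 0" for k using assms by (simp add: Psel_def)
  have fwd: "alg_indep (fst (fwd P1 P2 n)) (snd (fwd P1 P2 n))" for n
  proof (induct n)
    case (Suc n)
    then show ?case unfolding fwd_Suc fst_conv snd_conv by (rule alg_indep_mutation[OF _ nonzero])
  qed (simp add: alg_indep_X1_X2)
  have bwd: "alg_indep (fst (bwd P1 P2 n)) (snd (bwd P1 P2 n))" for n
  proof (induct n)
    case (Suc n)
    then show ?case unfolding bwd_Suc fst_conv snd_conv
      by (rule alg_indep_commute[OF alg_indep_mutation[OF alg_indep_commute nonzero]])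
  qed (simp add: alg_indep_X1_X2)
  show ?thesis
  proof (cases "k \<ge> 1")
    case True
    then have "fwd P1 P2 (nat (k - 1)) = (xseq P1 P2 k, xseq P1 P2 (k + 1))"
      by (simp add: fwd_eq_xseq algebra_simps)
    then show ?thesis using fwd[of "nat (k - 1)"] by simp
  next
    case False
    then have "bwd P1 P2 (nat (1 - k)) = (xseq P1 P2 k, xseq P1 P2 (k + 1))"
      by (simp add: bwd_eq_xseq algebra_simps)
    then show ?thesis using bwd[of "nat (1 - k)"] by simp
  qed
qed

lemma xseq_nonzero: "P1 \<noteq> 0 \<Longrightarrow> P2 \<noteq> 0 \<Longrightarrow> xseq P1 P2 k \<noteq> 0"
  using alg_indep_nonzero(1)[OF alg_indep_xseq] by blast

lemma xseq_exchange:
  assumes "P1 \<noteq> 0" "P2 \<noteq> 0"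
  shows "xseq P1 P2 (k + 1) * xseq P1 P2 (k - 1) = evalP (Psel P1 P2 k) (xseq P1 P2 k)"
proof (cases "k \<ge> 2")
  case True
  define n where "n = nat (k - 2)"
  have "snd (fwd P1 P2 (Suc n)) =
      evalP (Psel P1 P2 (int n + 2)) (snd (fwd P1 P2 n)) / fst (fwd P1 P2 n)"
    by (simp only: fwd_Suc snd_conv)
  then have "xseq P1 P2 (int n + 3) =
      evalP (Psel P1 P2 (int n + 2)) (xseq P1 P2 (int n + 2)) / xseq P1 P2 (int n + 1)"
    by (simp add: fwd_eq_xseq add.assoc add.commute)
  moreover have "int n + 2 = k" "int n + 3 = k + 1" "int n + 1 = k - 1"
    using True n_def by simp_all
  ultimately have "xseq P1 P2 (k + 1) = evalP (Psel P1 P2 k) (xseq P1 P2 k) / xseq P1 P2 (k - 1)"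
    by simp
  then show ?thesis using xseq_nonzero[OF assms, of "k - 1"] by simp
next
  case False
  define n where "n = nat (1 - k)"
  have "fst (bwd P1 P2 (Suc n)) =
      evalP (Psel P1 P2 (1 - int n)) (fst (bwd P1 P2 n)) / snd (bwd P1 P2 n)"
    by (simp only: bwd_Suc fst_conv)
  moreover have "1 - int n = k" "1 - int (Suc n) = k - 1" "2 - int n = k + 1"
    using False n_def by simp_all
  ultimately have "xseq P1 P2 (k - 1) = evalP (Psel P1 P2 k) (xseq P1 P2 k) / xseq P1 P2 (k + 1)"
    by (simp only: bwd_eq_xseq fst_conv snd_conv)
  then show ?thesis using xseq_nonzero[OF assms, of "k + 1"] by simp
qed

section \<open>The strong Laurent phenomenon\<close>

lemma subring_kbar: "subring (kbar P1 P2)"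
  by (simp add: kbar_def subring_ring_gen)

lemma Psel_add_2: "Psel P1 P2 (k + 2) = Psel P1 P2 k"
  by (simp add: Psel_def)

lemma coeff_0_palindromic: "palindromic P \<Longrightarrow> coeff P 0 = lead_coeff P"
  unfolding palindromic_def by (metis diff_zero le0)

locale monic_palindromic_pair =
  fixes P1 P2 :: "'k::field poly"
  assumes monic: "lead_coeff P1 = 1" "lead_coeff P2 = 1"
    and palindromic: "palindromic P1" "palindromic P2"
begin

abbreviation x :: "int \<Rightarrow> 'k ratfun2" where "x \<equiv> xseq P1 P2"

abbreviation K :: "'k set" where "K \<equiv> kbar P1 P2"

lemma nonzero: "P1 \<noteq> 0" "P2 \<noteq> 0"
  using monic by auto

lemma palindromic_Psel: "palindromic (Psel P1 P2 k)"
  using palindromic by (simp add: Psel_def)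

lemma coeff_0_Psel: "coeff (Psel P1 P2 k) 0 = 1"
  using monic palindromic by (simp add: Psel_def coeff_0_palindromic)

lemma poly_over_Psel: "poly_over K (Psel P1 P2 k)"
  by (auto simp: poly_over_def Psel_def kbar_def intro: ring_gen.gen)

lemma exchange: "x (k + 1) * x (k - 1) = evalP (Psel P1 P2 k) (x k)"
  by (rule xseq_exchange[OF nonzero])

lemma exchange': "x (k - 1) * x (k + 1) = evalP (Psel P1 P2 k) (x k)"
  using exchange by (simp add: mult.commute)

lemma exchange_succ: "x (j + 2) * x j = evalP (Psel P1 P2 (j + 1)) (x (j + 1))"
  using exchange[of "j + 1"] by (simp add: add.assoc)

lemma exchange_succ': "x j * x (j + 2) = evalP (Psel P1 P2 (j + 1)) (x (j + 1))"
  using exchange_succ by (simp add: mult.commute)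

lemma x_nonzero: "x k \<noteq> 0"
  by (rule xseq_nonzero[OF nonzero])

lemma Tk_eq_laurent: "Tk P1 P2 k = laurent K (x k) (x (k + 1))"
  by (simp add: Tk_def laurent_def)

lemma forward1_mem_laurent: "x (j + 1) \<in> laurent K (x (j - 1)) (x j)"
  by (rule laurent_exchange1[OF x_nonzero exchange poly_over_Psel])

lemma forward2_mem_laurent: "x (j + 2) \<in> laurent K (x (j - 1)) (x j)"
  by (rule laurent_exchange2[OF x_nonzero x_nonzero exchange exchange_succ poly_over_Psel poly_over_Psel])

lemma forward3_mem_laurent: "x (j + 3) \<in> laurent K (x (j - 1)) (x j)"
proof -
  have "x (j + 3) * x (j + 1) = evalP (Psel P1 P2 j) (x (j + 2))"
    using exchange[of "j + 2"] Psel_add_2[of P1 P2 j] by (simp add: add.assoc add.commute)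
  then show ?thesis
    by (rule laurent_exchange3[OF x_nonzero x_nonzero x_nonzero exchange exchange_succ _
        poly_over_Psel poly_over_Psel coeff_0_Psel palindromic_Psel])
qed

lemma backward1_mem_laurent: "x (j - 1) \<in> laurent K (x j) (x (j + 1))"
  using laurent_exchange1[OF x_nonzero exchange' poly_over_Psel] by (simp add: laurent_commute)

lemma backward2_mem_laurent: "x (j - 1) \<in> laurent K (x (j + 1)) (x (j + 2))"
  using laurent_exchange2[OF x_nonzero x_nonzero exchange_succ' exchange' poly_over_Psel poly_over_Psel]
  by (simp add: laurent_commute)

lemma backward3_mem_laurent: "x (j - 2) \<in> laurent K (x (j + 1)) (x (j + 2))"
proof -
  have "x (j - 2) * x j = evalP (Psel P1 P2 (j + 1)) (x (j - 1))"
    using exchange'[of "j - 1"] Psel_add_2[of P1 P2 "j - 1"] by (simp add: add.commute)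
  then show ?thesis
    using laurent_exchange3[OF x_nonzero x_nonzero x_nonzero exchange_succ' exchange' _
        poly_over_Psel poly_over_Psel coeff_0_Psel palindromic_Psel]
    by (simp add: laurent_commute)
qed

definition lower_bound :: "int \<Rightarrow> 'k ratfun2 set" where
  "lower_bound m = ring_gen (const2 ` K \<union> {x (m - 1), x m, x (m + 1), x (m + 2)})"

lemma subring_lower_bound: "subring (lower_bound m)"
  unfolding lower_bound_def by (rule subring_ring_gen)

lemma lower_bound_subset_Tk: "lower_bound m \<subseteq> Tk P1 P2 m"
  unfolding lower_bound_def Tk_eq_laurent
  using backward1_mem_laurent[of m] generators_mem_laurent forward1_mem_laurent[of "m + 1"]
  by (intro subset_laurent) (auto simp: add.assoc)

lemma Tk_Int_subset_lower_bound:
  "Tk P1 P2 (m - 1) \<inter> Tk P1 P2 m \<inter> Tk P1 P2 (m + 1) \<subseteq> lower_bound m"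
proof -
  have "evalP (Psel P1 P2 (m + 1)) (x (m + 1)) / x m = x (m + 2)"
    using exchange_succ[of m] x_nonzero[of m] by (simp add: field_simps)
  moreover have "evalP (Psel P1 P2 m) (x m) / x (m + 1) = x (m - 1)"
    using exchange[of m] x_nonzero[of "m + 1"] by (simp add: field_simps)
  ultimately have "laurent K (x m) (x (m + 1)) \<inter> laurent K (x (m + 1)) (x (m + 2)) \<inter>
      laurent K (x (m - 1)) (x m) \<subseteq> lower_bound m"
    using laurent_Int_subset_ring_gen[OF subring_kbar poly_over_Psel poly_over_Psel coeff_0_Psel
        coeff_0_Psel alg_indep_xseq[OF nonzero, of m], of "m + 1" m]
    by (simp add: lower_bound_def insert_commute)
  then show ?thesis
    unfolding Tk_eq_laurent by (auto simp: add.assoc)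
qed

lemma lower_bound_generators:
  "const2 ` K \<union> {x (m - 1), x m, x (m + 1), x (m + 2)} \<subseteq> lower_bound m"
  unfolding lower_bound_def by (auto intro: ring_gen.gen)

text \<open>Shift invariance of the lower bound is where the three-step Laurent property is needed.\<close>

lemma lower_bound_shift: "lower_bound (m + 1) = lower_bound m"
proof
  have "x (m + 3) \<in> Tk P1 P2 (m - 1) \<inter> Tk P1 P2 m \<inter> Tk P1 P2 (m + 1)"
    using forward3_mem_laurent[of m] forward2_mem_laurent[of "m + 1"] forward1_mem_laurent[of "m + 2"]
    by (simp add: Tk_eq_laurent add.assoc add.commute)
  then have "x (m + 3) \<in> lower_bound m"
    using Tk_Int_subset_lower_bound by blast
  then show "lower_bound (m + 1) \<subseteq> lower_bound m"
    using lower_bound_generators[of m] unfolding lower_bound_def[of "m + 1"]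
    by (intro ring_gen_least subring_lower_bound) (auto simp: add.assoc)
  have "x (m - 1) \<in> Tk P1 P2 m \<inter> Tk P1 P2 (m + 1) \<inter> Tk P1 P2 (m + 2)"
    using backward1_mem_laurent[of m] backward2_mem_laurent[of m] backward3_mem_laurent[of "m + 1"]
    by (simp add: Tk_eq_laurent add.assoc)
  then have "x (m - 1) \<in> lower_bound (m + 1)"
    using Tk_Int_subset_lower_bound[of "m + 1"] by (auto simp: add.assoc)
  then show "lower_bound m \<subseteq> lower_bound (m + 1)"
    using lower_bound_generators[of "m + 1"] unfolding lower_bound_def[of m]
    by (intro ring_gen_least subring_lower_bound) (auto simp: add.assoc)
qed

lemma lower_bound_eq: "lower_bound m = lower_bound 0"
proof (induct m rule: int_induct[where k = 0])
  case (step1 i)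
  then show ?case using lower_bound_shift[of i] by simp
next
  case (step2 i)
  then show ?case using lower_bound_shift[of "i - 1"] by simp
qed simp

lemma clusterA_eq_lower_bound: "clusterA P1 P2 = lower_bound 0"
proof
  have "x j \<in> lower_bound 0" for j
    using lower_bound_generators[of j] lower_bound_eq[of j] by auto
  then show "clusterA P1 P2 \<subseteq> lower_bound 0"
    using lower_bound_generators[of 0]
    unfolding clusterA_def by (intro ring_gen_least subring_lower_bound) auto
  show "lower_bound 0 \<subseteq> clusterA P1 P2"
    unfolding clusterA_def lower_bound_def by (rule ring_gen_mono) auto
qed

end

theorem theorem2p5:
  fixes P1 P2 :: "'k::field_char_0 poly" and m :: int
  assumes "lead_coeff P1 = 1" and "lead_coeff P2 = 1"
    and "palindromic P1" and "palindromic P2"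
  shows "clusterA P1 P2 = (\<Inter>k. Tk P1 P2 k)
    \<and> (\<Inter>k. Tk P1 P2 k) = (\<Inter>k\<in>{m - 1..m + 1}. Tk P1 P2 k)"
proof -
  interpret monic_palindromic_pair P1 P2
    using assms by unfold_locales
  have "clusterA P1 P2 \<subseteq> Tk P1 P2 k" for k
    using lower_bound_subset_Tk[of k] lower_bound_eq[of k] by (simp add: clusterA_eq_lower_bound)
  then have lower: "clusterA P1 P2 \<subseteq> (\<Inter>k. Tk P1 P2 k)"
    by blast
  have upper: "(\<Inter>k\<in>{m - 1..m + 1}. Tk P1 P2 k) \<subseteq> clusterA P1 P2"
    using Tk_Int_subset_lower_bound[of m] lower_bound_eq[of m]
    by (auto simp: clusterA_eq_lower_bound)
  have middle: "(\<Inter>k. Tk P1 P2 k) \<subseteq> (\<Inter>k\<in>{m - 1..m + 1}. Tk P1 P2 k)"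
    by (rule INT_greatest, rule INT_lower) simp
  show ?thesis
    using subset_antisym[OF lower subset_trans[OF middle upper]]
      subset_antisym[OF middle subset_trans[OF upper lower]] ..
qed

end
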